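(* Let $f(x;w)$ be a vanilla fully connected ReLU network, a ResNet, or a DenseNet, let $x\neq0$, and let $W^{\mathbf{k}}$ be any weight matrix of $f$. Then the set $\big\{w: J^{\mathbf{k}}=\frac{\partial f_{\mathbf{k}}(x;w)}{\partial W^{\mathbf{k}}}\big\}$ has full measure (its complement has Lebesgue measure zero), where $J^{\mathbf{k}}=\frac{\partial f(x;w)}{\partial W^{\mathbf{k}}}$.
   Context: $\phi(t)=\max(0,t)$. Vanilla: $y^0=\frac{1}{\sqrt{n_0}}W^0x$, $y^l=\sqrt2\phi(\frac{1}{\sqrt{n_{l-1}}}W^ly^{l-1})$, $f=\frac{1}{\sqrt{n_L}}W^{L+1}y^L$. ResNet: $y^0=\frac{1}{\sqrt{n_0}}W^0x$; $y^l=y^{l-1}+\sqrt{\alpha_l}\,y^{l-1,m}$ with $y^{l-1,1}=\frac{1}{\sqrt{n_{l-1}}}W^{l,1}y^{l-1}$, $y^{l-1,h}=\frac{1}{\sqrt{n_{l-1,h-1}}}W^{l,h}q^{l-1,h-1}$ ($1<h\le m$), $q^{l-1,h}=\sqrt2\phi(y^{l-1,h})$, $\alpha_l>0$; $f=\frac{1}{\sqrt{n_L}}W^Ly^L$. DenseNet: $y^0=\frac{1}{\sqrt{n_0}}W^0x$, $y^l=\sqrt{\frac{\alpha}{n_{l-1}l}}\sum_{h=0}^{l-1}W^{l,h}q^h$, $q^h=\sqrt2\phi(y^h)$, $\alpha>0$; $f=\frac{1}{\sqrt{n_L}}W^Ly^L$. Dimensions compatible. Path decomposition: $f(x;w)=\sum_{\gamma\in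 S}c_\gamma z_\gamma\prod_{l=1}^{|\gamma|}w_{\gamma,l}$, where $S$ is the set of input-to-output paths in the computation graph (through weight edges, identity skips, concatenations), $w_{\gamma,l}$ the weights along $\gamma$, $c_\gamma$ the constant factors (scalings, $\sqrt2$'s, input coordinate), and $z_\gamma\in\{0,1\}$ the indicator that all ReLUs along $\gamma$ are active at $(x,w)$. With $S_{\mathbf{k}}$ the paths using a weight of $W^{\mathbf{k}}$, $f_{\mathbf{k}}(x;w)=\sum_{\gamma\in S_{\mathbf{k}}}c_\gamma z_\gamma\prod_l w_{\gamma,l}$. Derivatives are taken where they exist. *)

theory Defs
  imports "HOL-Analysis.Analysis"
begin

definition relu :: "real \<Rightarrow> real" where
  "relu t = max 0 t"

text \<open>Labels of weight matrices W^k: the input matrix W^0 (BIn), intermediate matrices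
  (BMid l h: vanilla W^l as BMid l 0, ResNet W^{l,h}, DenseNet W^{l,h}) and the
  output matrix (BOut: vanilla W^{L+1}, ResNet/DenseNet W^L).\<close>
datatype blk = BIn | BMid nat nat | BOut

text \<open>A weight index (k,i,j) is entry (row i, column j) of matrix W^k.\<close>
type_synonym widx = "blk \<times> nat \<times> nat"

text \<open>Nodes of the computation graph: input coordinates, hidden units, output units.\<close>
datatype node = NIn nat | N nat nat nat | NOut nat

text \<open>Edge (u, v, c, wo): from u to v, constant factor c, and either a weight (Some a)
  or an identity skip (None).\<close>
type_synonym edge = "node \<times> node \<times> real \<times> widx option"

definition is_path :: "edge set \<Rightarrow> node set \<Rightarrow> node \<Rightarrow> edge list \<Rightarrow> bool" where
  "is_path E ins out \<gamma> \<longleftrightarrow> \<gamma> \<noteq> [] \<and> set \<gamma> \<subseteq> E \<and> fst (hd \<gamma>) \<in> ins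
     \<and> fst (snd (last \<gamma>)) = out
     \<and> (\<forall>i. Suc i < length \<gamma> \<longrightarrow> fst (snd (\<gamma> ! i)) = fst (\<gamma> ! Suc i))"

text \<open>c_gamma z_gamma prod w: input coordinate times, for every edge, its constant,
  its weight (1 for identity skips) and the activity indicator of its target node
  (act v is True for linear nodes and the indicator "pre-activation > 0" for ReLU nodes).\<close>
definition path_term :: "(node \<Rightarrow> real) \<Rightarrow> (node \<Rightarrow> bool) \<Rightarrow> (widx \<Rightarrow> real) \<Rightarrow> edge list \<Rightarrow> real" where
  "path_term xin act w \<gamma> = xin (fst (hd \<gamma>)) *
     prod_list (map (\<lambda>(u, v, c, wo). c * (case wo of None \<Rightarrow> 1 | Some a \<Rightarrow> w a)
                                        * (if act v then 1 else 0)) \<gamma>)"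

definition uses_block :: "blk \<Rightarrow> edge list \<Rightarrow> bool" where
  "uses_block k \<gamma> \<longleftrightarrow> (\<exists>e\<in>set \<gamma>. \<exists>a. snd (snd (snd e)) = Some a \<and> fst a = k)"

definition path_fk :: "edge set \<Rightarrow> node set \<Rightarrow> node \<Rightarrow> (node \<Rightarrow> real) \<Rightarrow> (node \<Rightarrow> bool)
    \<Rightarrow> (widx \<Rightarrow> real) \<Rightarrow> blk \<Rightarrow> real" where
  "path_fk E ins out xin act w k =
     (\<Sum>\<gamma>\<in>{\<gamma>. is_path E ins out \<gamma> \<and> uses_block k \<gamma>}. path_term xin act w \<gamma>)"

definition in_nodes :: "nat \<Rightarrow> node set" where
  "in_nodes d = {NIn j |j. j < d}"

definition xin :: "(nat \<Rightarrow> real) \<Rightarrow> node \<Rightarrow> real" where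
  "xin x v = (case v of NIn j \<Rightarrow> x j | _ \<Rightarrow> 0)"

definition partials_agree_ae ::
  "widx set \<Rightarrow> ((widx \<Rightarrow> real) \<Rightarrow> real) \<Rightarrow> ((widx \<Rightarrow> real) \<Rightarrow> real) \<Rightarrow> blk \<Rightarrow> bool" where
  "partials_agree_ae I F G k \<longleftrightarrow>
     (AE w in (\<Pi>\<^sub>M a\<in>I. lborel). \<forall>a\<in>I. fst a = k \<longrightarrow>
        (\<exists>D. ((\<lambda>t. F (w(a := t))) has_real_derivative D) (at (w a))
           \<and> ((\<lambda>t. G (w(a := t))) has_real_derivative D) (at (w a))))"

text \<open>Input x in R^d, widths n 0, ..., n L, output dimension dout.\<close>

primrec van_y :: "nat \<Rightarrow> (nat \<Rightarrow> nat) \<Rightarrow> (nat \<Rightarrow> real) \<Rightarrow> (widx \<Rightarrow> real) \<Rightarrow> nat \<Rightarrow> nat \<Rightarrow> real" where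
  "van_y d n x w 0 = (\<lambda>i. (1 / sqrt (real (n 0))) * (\<Sum>j<d. w (BIn, i, j) * x j))"
| "van_y d n x w (Suc l) = (\<lambda>i. sqrt 2 * relu ((1 / sqrt (real (n l))) *
       (\<Sum>j<n l. w (BMid (Suc l) 0, i, j) * van_y d n x w l j)))"

text \<open>Pre-activation of unit i of layer l (l \<ge> 1).\<close>
definition van_s :: "nat \<Rightarrow> (nat \<Rightarrow> nat) \<Rightarrow> (nat \<Rightarrow> real) \<Rightarrow> (widx \<Rightarrow> real) \<Rightarrow> nat \<Rightarrow> nat \<Rightarrow> real" where
  "van_s d n x w l i = (1 / sqrt (real (n (l - 1)))) *
       (\<Sum>j<n (l - 1). w (BMid l 0, i, j) * van_y d n x w (l - 1) j)"

definition van_f :: "nat \<Rightarrow> (nat \<Rightarrow> nat) \<Rightarrow> nat \<Rightarrow> (nat \<Rightarrow> real) \<Rightarrow> (widx \<Rightarrow> real) \<Rightarrow> nat \<Rightarrow> real" where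
  "van_f d n L x w r = (1 / sqrt (real (n L))) * (\<Sum>j<n L. w (BOut, r, j) * van_y d n x w L j)"

definition van_act :: "nat \<Rightarrow> (nat \<Rightarrow> nat) \<Rightarrow> (nat \<Rightarrow> real) \<Rightarrow> (widx \<Rightarrow> real) \<Rightarrow> node \<Rightarrow> bool" where
  "van_act d n x w v = (case v of N l h i \<Rightarrow> (l = 0 \<or> van_s d n x w l i > 0) | _ \<Rightarrow> True)"

definition van_idx :: "nat \<Rightarrow> (nat \<Rightarrow> nat) \<Rightarrow> nat \<Rightarrow> nat \<Rightarrow> widx set" where
  "van_idx d n L dout =
     {(BIn, i, j) |i j. i < n 0 \<and> j < d}
   \<union> {(BMid l 0, i, j) |l i j. 1 \<le> l \<and> l \<le> L \<and> i < n l \<and> j < n (l - 1)}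
   \<union> {(BOut, r, j) |r j. r < dout \<and> j < n L}"

definition van_edges :: "nat \<Rightarrow> (nat \<Rightarrow> nat) \<Rightarrow> nat \<Rightarrow> nat \<Rightarrow> edge set" where
  "van_edges d n L dout =
     {(NIn j, N 0 0 i, 1 / sqrt (real (n 0)), Some (BIn, i, j)) |i j. i < n 0 \<and> j < d}
   \<union> {(N (l - 1) 0 j, N l 0 i, (if l - 1 = 0 then 1 else sqrt 2) / sqrt (real (n (l - 1))),
        Some (BMid l 0, i, j)) |l i j. 1 \<le> l \<and> l \<le> L \<and> i < n l \<and> j < n (l - 1)}
   \<union> {(N L 0 j, NOut r, (if L = 0 then 1 else sqrt 2) / sqrt (real (n L)), Some (BOut, r, j))
        |r j. r < dout \<and> j < n L}"

text \<open>Common width n of y^0..y^L, m \<ge> 1 sublayers per block; nh l h is the width of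
  y^{l-1,h} for 1 \<le> h < m (the width of y^{l-1,m} is n by compatibility).\<close>

definition rdim :: "nat \<Rightarrow> (nat \<Rightarrow> nat \<Rightarrow> nat) \<Rightarrow> nat \<Rightarrow> nat \<Rightarrow> nat \<Rightarrow> nat" where
  "rdim n nh m l h = (if h = 0 \<or> h = m then n else nh l h)"

text \<open>res_inner ... l yp h = y^{l-1,h} where yp = y^{l-1}.\<close>
fun res_inner :: "nat \<Rightarrow> (nat \<Rightarrow> nat \<Rightarrow> nat) \<Rightarrow> nat \<Rightarrow> (widx \<Rightarrow> real) \<Rightarrow> nat \<Rightarrow> (nat \<Rightarrow> real)
    \<Rightarrow> nat \<Rightarrow> nat \<Rightarrow> real" where
  "res_inner n nh m w l yp 0 = yp"
| "res_inner n nh m w l yp (Suc 0) = (\<lambda>i. (1 / sqrt (real n)) * (\<Sum>j<n. w (BMid l 1, i, j) * yp j))"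
| "res_inner n nh m w l yp (Suc (Suc h)) = (\<lambda>i. (1 / sqrt (real (rdim n nh m l (Suc h)))) *
     (\<Sum>j<rdim n nh m l (Suc h). w (BMid l (Suc (Suc h)), i, j) *
        (sqrt 2 * relu (res_inner n nh m w l yp (Suc h) j))))"

primrec res_y :: "nat \<Rightarrow> nat \<Rightarrow> (nat \<Rightarrow> nat \<Rightarrow> nat) \<Rightarrow> nat \<Rightarrow> (nat \<Rightarrow> real) \<Rightarrow> (nat \<Rightarrow> real)
    \<Rightarrow> (widx \<Rightarrow> real) \<Rightarrow> nat \<Rightarrow> nat \<Rightarrow> real" where
  "res_y d n nh m \<alpha> x w 0 = (\<lambda>i. (1 / sqrt (real n)) * (\<Sum>j<d. w (BIn, i, j) * x j))"
| "res_y d n nh m \<alpha> x w (Suc l) = (\<lambda>i. res_y d n nh m \<alpha> x w l i +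
      sqrt (\<alpha> (Suc l)) * res_inner n nh m w (Suc l) (res_y d n nh m \<alpha> x w l) m i)"

definition res_f :: "nat \<Rightarrow> nat \<Rightarrow> (nat \<Rightarrow> nat \<Rightarrow> nat) \<Rightarrow> nat \<Rightarrow> nat \<Rightarrow> (nat \<Rightarrow> real) \<Rightarrow> (nat \<Rightarrow> real)
    \<Rightarrow> (widx \<Rightarrow> real) \<Rightarrow> nat \<Rightarrow> real" where
  "res_f d n nh m L \<alpha> x w r = (1 / sqrt (real n)) * (\<Sum>j<n. w (BOut, r, j) * res_y d n nh m \<alpha> x w L j)"

text \<open>Nodes: N l 0 i is y^l_i; N l h i (h \<ge> 1) is y^{l-1,h}_i, a ReLU node iff h < m.\<close>
definition res_act :: "nat \<Rightarrow> nat \<Rightarrow> (nat \<Rightarrow> nat \<Rightarrow> nat) \<Rightarrow> nat \<Rightarrow> (nat \<Rightarrow> real) \<Rightarrow> (nat \<Rightarrow> real)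
    \<Rightarrow> (widx \<Rightarrow> real) \<Rightarrow> node \<Rightarrow> bool" where
  "res_act d n nh m \<alpha> x w v = (case v of
      N l h i \<Rightarrow> (h = 0 \<or> m \<le> h \<or> res_inner n nh m w l (res_y d n nh m \<alpha> x w (l - 1)) h i > 0)
    | _ \<Rightarrow> True)"

definition res_idx :: "nat \<Rightarrow> nat \<Rightarrow> (nat \<Rightarrow> nat \<Rightarrow> nat) \<Rightarrow> nat \<Rightarrow> nat \<Rightarrow> nat \<Rightarrow> widx set" where
  "res_idx d n nh m L dout =
     {(BIn, i, j) |i j. i < n \<and> j < d}
   \<union> {(BMid l h, i, j) |l h i j. 1 \<le> l \<and> l \<le> L \<and> 1 \<le> h \<and> h \<le> m
        \<and> i < rdim n nh m l h \<and> j < rdim n nh m l (h - 1)}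
   \<union> {(BOut, r, j) |r j. r < dout \<and> j < n}"

definition res_edges :: "nat \<Rightarrow> nat \<Rightarrow> (nat \<Rightarrow> nat \<Rightarrow> nat) \<Rightarrow> nat \<Rightarrow> nat \<Rightarrow> (nat \<Rightarrow> real) \<Rightarrow> nat
    \<Rightarrow> edge set" where
  "res_edges d n nh m L \<alpha> dout =
     {(NIn j, N 0 0 i, 1 / sqrt (real n), Some (BIn, i, j)) |i j. i < n \<and> j < d}
   \<union> {(if h = 1 then N (l - 1) 0 j else N l (h - 1) j, N l h i,
        (if h = 1 then 1 else sqrt 2) / sqrt (real (rdim n nh m l (h - 1))), Some (BMid l h, i, j))
        |l h i j. 1 \<le> l \<and> l \<le> L \<and> 1 \<le> h \<and> h \<le> m
          \<and> i < rdim n nh m l h \<and> j < rdim n nh m l (h - 1)}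
   \<union> {(N (l - 1) 0 i, N l 0 i, 1, None) |l i. 1 \<le> l \<and> l \<le> L \<and> i < n}
   \<union> {(N l m i, N l 0 i, sqrt (\<alpha> l), None) |l i. 1 \<le> l \<and> l \<le> L \<and> i < n}
   \<union> {(N L 0 j, NOut r, 1 / sqrt (real n), Some (BOut, r, j)) |r j. r < dout \<and> j < n}"

text \<open>Widths n 0..n L; dense_ys l h = y^h for h \<le> l.\<close>

primrec dense_ys :: "nat \<Rightarrow> (nat \<Rightarrow> nat) \<Rightarrow> real \<Rightarrow> (nat \<Rightarrow> real) \<Rightarrow> (widx \<Rightarrow> real)
    \<Rightarrow> nat \<Rightarrow> nat \<Rightarrow> nat \<Rightarrow> real" where
  "dense_ys d n \<alpha> x w 0 = (\<lambda>h i. (1 / sqrt (real (n 0))) * (\<Sum>j<d. w (BIn, i, j) * x j))"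
| "dense_ys d n \<alpha> x w (Suc l) = (\<lambda>h. if h = Suc l then
      (\<lambda>i. sqrt (\<alpha> / (real (n l) * real (Suc l))) *
         (\<Sum>h'<Suc l. \<Sum>j<n h'. w (BMid (Suc l) h', i, j) * (sqrt 2 * relu (dense_ys d n \<alpha> x w l h' j))))
    else dense_ys d n \<alpha> x w l h)"

definition dense_y :: "nat \<Rightarrow> (nat \<Rightarrow> nat) \<Rightarrow> real \<Rightarrow> (nat \<Rightarrow> real) \<Rightarrow> (widx \<Rightarrow> real)
    \<Rightarrow> nat \<Rightarrow> nat \<Rightarrow> real" where
  "dense_y d n \<alpha> x w h = dense_ys d n \<alpha> x w h h"

definition dense_f :: "nat \<Rightarrow> (nat \<Rightarrow> nat) \<Rightarrow> nat \<Rightarrow> real \<Rightarrow> (nat \<Rightarrow> real) \<Rightarrow> (widx \<Rightarrow> real)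
    \<Rightarrow> nat \<Rightarrow> real" where
  "dense_f d n L \<alpha> x w r = (1 / sqrt (real (n L))) * (\<Sum>j<n L. w (BOut, r, j) * dense_y d n \<alpha> x w L j)"

text \<open>Node N h 0 i is y^h_i; a ReLU node (feeding q^h) iff h < L.\<close>
definition dense_act :: "nat \<Rightarrow> (nat \<Rightarrow> nat) \<Rightarrow> nat \<Rightarrow> real \<Rightarrow> (nat \<Rightarrow> real) \<Rightarrow> (widx \<Rightarrow> real)
    \<Rightarrow> node \<Rightarrow> bool" where
  "dense_act d n L \<alpha> x w v = (case v of N h k i \<Rightarrow> (L \<le> h \<or> dense_y d n \<alpha> x w h i > 0) | _ \<Rightarrow> True)"

definition dense_idx :: "nat \<Rightarrow> (nat \<Rightarrow> nat) \<Rightarrow> nat \<Rightarrow> nat \<Rightarrow> widx set" where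
  "dense_idx d n L dout =
     {(BIn, i, j) |i j. i < n 0 \<and> j < d}
   \<union> {(BMid l h, i, j) |l h i j. 1 \<le> l \<and> l \<le> L \<and> h < l \<and> i < n l \<and> j < n h}
   \<union> {(BOut, r, j) |r j. r < dout \<and> j < n L}"

definition dense_edges :: "nat \<Rightarrow> (nat \<Rightarrow> nat) \<Rightarrow> nat \<Rightarrow> real \<Rightarrow> nat \<Rightarrow> edge set" where
  "dense_edges d n L \<alpha> dout =
     {(NIn j, N 0 0 i, 1 / sqrt (real (n 0)), Some (BIn, i, j)) |i j. i < n 0 \<and> j < d}
   \<union> {(N h 0 j, N l 0 i, sqrt (\<alpha> / (real (n (l - 1)) * real l)) * sqrt 2, Some (BMid l h, i, j))
        |l h i j. 1 \<le> l \<and> l \<le> L \<and> h < l \<and> i < n l \<and> j < n h}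
   \<union> {(N L 0 j, NOut r, 1 / sqrt (real (n L)), Some (BOut, r, j)) |r j. r < dout \<and> j < n L}"

end

theory Submission
  imports Defs
begin

text \<open>Expanding f over the paths of its computation graph, f_k is the part of the sum coming from
  paths through W^k, and every other path avoids the weights of W^k. Hence wherever the activation
  pattern z is locally constant in a weight w_a of W^k, f - f_k is locally constant in w_a and the
  two partial derivatives agree. The pattern can only change where a pre-activation crosses zero.
  Every pre-activation is affine in one row of the matrix that feeds it, with coefficients that do
  not depend on that row, so by Fubini it is almost surely nonzero unless all its coefficients
  vanish. Inductively along the network, almost every w makes each pre-activation either nonzero
  or identically zero near w along every coordinate axis; by continuity its sign, and with it the
  activation pattern, is then locally constant in every coordinate.\<close>

section \<open>Null sets of affine functions\<close>

abbreviation lborel_on :: "'i set \<Rightarrow> ('i \<Rightarrow> real) measure" where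
  "lborel_on I \<equiv> Pi\<^sub>M I (\<lambda>_. lborel)"

lemma borel_measurable_coordinate_lborel_on[measurable]:
  "(\<lambda>w. w a) \<in> borel_measurable (lborel_on I)"
proof (cases "a \<in> I")
  case False
  then have "w a = undefined" if "w \<in> space (lborel_on I)" for w
    using that by (auto simp: space_PiM PiE_def extensional_def)
  then show ?thesis by (subst measurable_cong[where g = "\<lambda>_. undefined"]) auto
qed simp

lemma AE_affine_in_coordinate_nonzero:
  fixes A B :: "('i \<Rightarrow> real) \<Rightarrow> real"
  assumes fin: "finite I" and b: "b \<in> I"
    and [measurable]: "A \<in> borel_measurable (lborel_on I)" "B \<in> borel_measurable (lborel_on I)"
    and A_indep: "\<And>w t. A (w(b := t)) = A w" and B_indep: "\<And>w t. B (w(b := t)) = B w"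
  shows "AE w in lborel_on I. B w = 0 \<or> A w + w b * B w \<noteq> 0"
proof -
  interpret product_sigma_finite "\<lambda>_::'i. lborel :: real measure" by standard
  define Z where "Z = {w \<in> space (lborel_on I). B w \<noteq> 0 \<and> A w + w b * B w = 0}"
  have Z_sets[measurable]: "Z \<in> sets (lborel_on I)" unfolding Z_def by measurable
  have I_eq: "I = insert b (I - {b})" using b by auto
  have slice_null: "(\<integral>\<^sup>+ t. indicator Z (w(b := t)) \<partial>lborel) = 0" for w
  proof -
    have "indicator Z (w(b := t)) \<le> (indicator {- A w / B w} t :: ennreal)" for t
    proof (cases "w(b := t) \<in> Z")
      case True
      then have "B w \<noteq> 0" "A w + t * B w = 0"
        unfolding Z_def using A_indep[of w t] B_indep[of w t] by auto
      then have "t = - A w / B w" by (simp add: field_simps)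
      then show ?thesis using True by simp
    qed simp
    then have "(\<integral>\<^sup>+ t. indicator Z (w(b := t)) \<partial>lborel) \<le> (\<integral>\<^sup>+ t. indicator {- A w / B w} t \<partial>lborel)"
      by (intro nn_integral_mono)
    then show ?thesis by simp
  qed
  have "emeasure (lborel_on I) Z = integral\<^sup>N (lborel_on I) (indicator Z)"
    by simp
  also have "\<dots> = (\<integral>\<^sup>+ v. (\<integral>\<^sup>+ t. indicator Z (v(b := t)) \<partial>lborel) \<partial>lborel_on (I - {b}))"
    using fin Z_sets I_eq by (subst I_eq, intro product_nn_integral_insert) (auto simp flip: I_eq)
  also have "\<dots> = 0" by (simp add: slice_null)
  finally have "Z \<in> null_sets (lborel_on I)" by auto
  then show ?thesis by (rule AE_I') (auto simp: Z_def)
qed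

lemma AE_linear_combination_nonzero:
  fixes b :: "'j \<Rightarrow> 'i" and u :: "'j \<Rightarrow> ('i \<Rightarrow> real) \<Rightarrow> real" and A :: "('i \<Rightarrow> real) \<Rightarrow> real"
  assumes fin: "finite I" and finJ: "finite J" and inj: "inj_on b J" and b: "b ` J \<subseteq> I"
    and u_meas: "\<And>j. j \<in> J \<Longrightarrow> u j \<in> borel_measurable (lborel_on I)"
    and A_meas: "A \<in> borel_measurable (lborel_on I)"
    and u_indep: "\<And>j j' w t. j \<in> J \<Longrightarrow> j' \<in> J \<Longrightarrow> u j (w(b j' := t)) = u j w"
    and A_indep: "\<And>j' w t. j' \<in> J \<Longrightarrow> A (w(b j' := t)) = A w"
  shows "AE w in lborel_on I. (\<forall>j\<in>J. u j w = 0) \<or> A w + (\<Sum>j\<in>J. w (b j) * u j w) \<noteq> 0"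
proof -
  have "AE w in lborel_on I. u j w = 0 \<or> A w + (\<Sum>j\<in>J. w (b j) * u j w) \<noteq> 0" if j: "j \<in> J" for j
  proof -
    define A' where "A' w = A w + (\<Sum>j'\<in>J - {j}. w (b j') * u j' w)" for w
    have A'_meas: "A' \<in> borel_measurable (lborel_on I)"
      unfolding A'_def using A_meas u_meas by measurable
    have "A' (w(b j := t)) = A' w" for w t
    proof -
      have "(w(b j := t)) (b j') = w (b j')" if "j' \<in> J - {j}" for j'
        using that inj j by (auto dest: inj_onD)
      then show ?thesis
        unfolding A'_def using A_indep[OF j] u_indep[OF _ j] by (auto intro!: sum.cong)
    qed
    then have "AE w in lborel_on I. u j w = 0 \<or> A' w + w (b j) * u j w \<noteq> 0"
      using b j by (intro AE_affine_in_coordinate_nonzero[OF fin _ A'_meas u_meas] u_indep) auto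
    moreover have "A w + (\<Sum>j\<in>J. w (b j) * u j w) = A' w + w (b j) * u j w" for w
      unfolding A'_def using sum.remove[OF finJ j, of "\<lambda>j. w (b j) * u j w"] by simp
    ultimately show ?thesis by simp
  qed
  then have "AE w in lborel_on I. \<forall>j\<in>J. u j w = 0 \<or> A w + (\<Sum>j\<in>J. w (b j) * u j w) \<noteq> 0"
    by (subst AE_finite_all[OF finJ]) auto
  then show ?thesis by eventually_elim auto
qed

section \<open>Separate continuity and stable zeros\<close>

lemma relu_measurable[measurable]: "relu \<in> borel_measurable borel"
  unfolding relu_def by measurable

lemma isCont_relu: "isCont relu x"
  unfolding relu_def by (intro continuous_intros)

lemma relu_eq_indicator_mult: "(if 0 < s then 1 else 0) * s = relu s"
  by (simp add: relu_def)

definition separately_continuous :: "(('i \<Rightarrow> real) \<Rightarrow> real) \<Rightarrow> bool" where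
  "separately_continuous f \<longleftrightarrow> (\<forall>w a. isCont (\<lambda>t. f (w(a := t))) (w a))"

lemma separately_continuous_const: "separately_continuous (\<lambda>w. c)"
  unfolding separately_continuous_def by simp

lemma separately_continuous_coordinate: "separately_continuous (\<lambda>w. w b)"
  unfolding separately_continuous_def
proof (intro allI)
  fix w a
  show "isCont (\<lambda>t. (w(a := t)) b) (w a)" by (cases "a = b") simp_all
qed

lemma separately_continuous_add:
  "separately_continuous f \<Longrightarrow> separately_continuous g \<Longrightarrow> separately_continuous (\<lambda>w. f w + g w)"
  unfolding separately_continuous_def by (auto intro!: continuous_intros)

lemma separately_continuous_mult:
  "separately_continuous f \<Longrightarrow> separately_continuous g \<Longrightarrow> separately_continuous (\<lambda>w. f w * g w)"
  unfolding separately_continuous_def by (auto intro!: continuous_intros)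

lemma separately_continuous_divide:
  "separately_continuous f \<Longrightarrow> separately_continuous (\<lambda>w. f w / c)"
  unfolding divide_inverse by (intro separately_continuous_mult separately_continuous_const)

lemma separately_continuous_sum:
  "(\<And>j. j \<in> J \<Longrightarrow> separately_continuous (f j)) \<Longrightarrow> separately_continuous (\<lambda>w. \<Sum>j\<in>J. f j w)"
  unfolding separately_continuous_def by (auto intro!: continuous_intros)

lemma separately_continuous_relu:
  "separately_continuous f \<Longrightarrow> separately_continuous (\<lambda>w. relu (f w))"
  unfolding separately_continuous_def
  by (auto intro!: continuous_at_compose[of _ _ relu, unfolded o_def] isCont_relu)

lemmas separately_continuous_intros =
  separately_continuous_const separately_continuous_coordinate separately_continuous_add
  separately_continuous_mult separately_continuous_divide separately_continuous_sum
  separately_continuous_relu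

text \<open>For a separately continuous f, a stable zero at w makes the sign of f locally constant
  along every coordinate line through w.\<close>
definition zero_stable :: "(('i \<Rightarrow> real) \<Rightarrow> real) \<Rightarrow> ('i \<Rightarrow> real) \<Rightarrow> bool" where
  "zero_stable f w \<longleftrightarrow> (f w = 0 \<longrightarrow> (\<forall>a. \<forall>\<^sub>F t in nhds (w a). f (w(a := t)) = 0))"

lemma zero_stable_const: "zero_stable (\<lambda>w. c) w"
  unfolding zero_stable_def by simp

lemma zero_stable_mult_left:
  assumes "zero_stable f w"
  shows "zero_stable (\<lambda>w. c * f w) w"
  unfolding zero_stable_def
proof (intro impI allI)
  fix a assume "c * f w = 0"
  then have "c = 0 \<or> f w = 0" by simp
  then show "\<forall>\<^sub>F t in nhds (w a). c * f (w(a := t)) = 0"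
  proof
    assume "f w = 0"
    with assms have "\<forall>\<^sub>F t in nhds (w a). f (w(a := t)) = 0" unfolding zero_stable_def by blast
    then show ?thesis by (rule eventually_mono) simp
  qed simp
qed

lemma zero_stable_eventually_pos_iff:
  assumes cont: "separately_continuous f" and stable: "zero_stable f w"
  shows "\<forall>\<^sub>F t in nhds (w a). (0 < f (w(a := t))) = (0 < f w)"
proof -
  have "isCont (\<lambda>t. f (w(a := t))) (w a)" using cont unfolding separately_continuous_def by blast
  then have lim: "((\<lambda>t. f (w(a := t))) \<longlongrightarrow> f w) (nhds (w a))"
    by (simp add: isCont_def tendsto_nhds_iff)
  consider "0 < f w" | "f w < 0" | "f w = 0" by linarith
  then show ?thesis
  proof cases
    case 1
    then show ?thesis using order_tendstoD(1)[OF lim 1] by (auto elim: eventually_mono)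
  next
    case 2
    then show ?thesis using order_tendstoD(2)[OF lim 2] by (auto elim: eventually_mono)
  next
    case 3
    then have "\<forall>\<^sub>F t in nhds (w a). f (w(a := t)) = 0"
      using stable unfolding zero_stable_def by blast
    then show ?thesis using 3 by (auto elim: eventually_mono)
  qed
qed

lemma zero_stable_mult_relu:
  assumes cont: "separately_continuous f" and stable: "zero_stable f w"
  shows "zero_stable (\<lambda>w. c * relu (f w)) w"
  unfolding zero_stable_def
proof (intro impI allI)
  fix a assume "c * relu (f w) = 0"
  then have "c = 0 \<or> \<not> 0 < f w" by (auto simp: relu_def)
  then show "\<forall>\<^sub>F t in nhds (w a). c * relu (f (w(a := t))) = 0"
  proof
    assume "\<not> 0 < f w"
    with zero_stable_eventually_pos_iff[OF cont stable, of a]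
    have "\<forall>\<^sub>F t in nhds (w a). \<not> 0 < f (w(a := t))" by simp
    then show ?thesis by (rule eventually_mono) (simp add: relu_def)
  qed simp
qed

text \<open>Off a null set the sum can only vanish where all coefficients u j vanish, and then the
  stable zeros of A and of the u j make it vanish near w along every coordinate axis.\<close>
lemma AE_zero_stable_affine:
  fixes b :: "'j \<Rightarrow> 'i" and u :: "'j \<Rightarrow> ('i \<Rightarrow> real) \<Rightarrow> real" and A :: "('i \<Rightarrow> real) \<Rightarrow> real"
  assumes fin: "finite I" and finJ: "finite J" and inj: "inj_on b J" and b: "b ` J \<subseteq> I"
    and u_meas: "\<And>j. j \<in> J \<Longrightarrow> u j \<in> borel_measurable (lborel_on I)"
    and A_meas: "A \<in> borel_measurable (lborel_on I)"
    and u_indep: "\<And>j j' w t. j \<in> J \<Longrightarrow> j' \<in> J \<Longrightarrow> u j (w(b j' := t)) = u j w"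
    and A_indep: "\<And>j' w t. j' \<in> J \<Longrightarrow> A (w(b j' := t)) = A w"
  shows "AE w in lborel_on I. zero_stable A w \<longrightarrow> (\<forall>j\<in>J. zero_stable (u j) w) \<longrightarrow>
            zero_stable (\<lambda>w. A w + (\<Sum>j\<in>J. w (b j) * u j w)) w"
proof -
  have "AE w in lborel_on I. (\<forall>j\<in>J. u j w = 0) \<or> A w + (\<Sum>j\<in>J. w (b j) * u j w) \<noteq> 0"
    by (rule AE_linear_combination_nonzero[OF fin finJ inj b])
       (simp_all add: u_meas A_meas u_indep A_indep)
  then show ?thesis
  proof eventually_elim
    case (elim w)
    show ?case
    proof (intro impI)
      assume A_stable: "zero_stable A w" and u_stable: "\<forall>j\<in>J. zero_stable (u j) w"
      show "zero_stable (\<lambda>w. A w + (\<Sum>j\<in>J. w (b j) * u j w)) w"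
        unfolding zero_stable_def
      proof (intro impI allI)
        fix a assume zero: "A w + (\<Sum>j\<in>J. w (b j) * u j w) = 0"
        then have u_zero: "\<forall>j\<in>J. u j w = 0" using elim by blast
        then have "A w = 0" using zero by simp
        then have "\<forall>\<^sub>F t in nhds (w a). A (w(a := t)) = 0"
          using A_stable unfolding zero_stable_def by blast
        moreover have "\<forall>\<^sub>F t in nhds (w a). \<forall>j\<in>J. u j (w(a := t)) = 0"
          using u_stable u_zero finJ unfolding zero_stable_def
          by (subst eventually_ball_finite_distrib) auto
        ultimately show "\<forall>\<^sub>F t in nhds (w a).
            A (w(a := t)) + (\<Sum>j\<in>J. (w(a := t)) (b j) * u j (w(a := t))) = 0"
          by eventually_elim simp
      qed
    qed
  qed
qed

lemma AE_zero_stable_linear: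
  fixes b :: "'j \<Rightarrow> 'i" and u :: "'j \<Rightarrow> ('i \<Rightarrow> real) \<Rightarrow> real"
  assumes "finite I" "finite J" "inj_on b J" "b ` J \<subseteq> I"
    and "\<And>j. j \<in> J \<Longrightarrow> u j \<in> borel_measurable (lborel_on I)"
    and "\<And>j j' w t. j \<in> J \<Longrightarrow> j' \<in> J \<Longrightarrow> u j (w(b j' := t)) = u j w"
  shows "AE w in lborel_on I. (\<forall>j\<in>J. zero_stable (u j) w) \<longrightarrow>
            zero_stable (\<lambda>w. c * (\<Sum>j\<in>J. w (b j) * u j w)) w"
proof -
  have "AE w in lborel_on I. zero_stable (\<lambda>_. 0) w \<longrightarrow> (\<forall>j\<in>J. zero_stable (u j) w) \<longrightarrow>
            zero_stable (\<lambda>w. 0 + (\<Sum>j\<in>J. w (b j) * u j w)) w"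
    by (rule AE_zero_stable_affine) (simp_all add: assms)
  then show ?thesis
  proof eventually_elim
    case (elim w)
    then show ?case
      unfolding zero_stable_def by (auto simp: zero_stable_const elim: eventually_mono)
  qed
qed

lemma AE_nat_induct:
  assumes "AE x in M. P 0 x" and "\<And>l. l < K \<Longrightarrow> AE x in M. P l x \<longrightarrow> P (Suc l) x"
  shows "AE x in M. \<forall>l\<le>K. P l x"
proof -
  have "AE x in M. \<forall>l\<in>{..<K}. P l x \<longrightarrow> P (Suc l) x"
    using assms(2) by (subst AE_finite_all) auto
  with assms(1) show ?thesis
  proof eventually_elim
    case (elim x)
    show ?case
    proof (intro allI impI)
      show "l \<le> K \<Longrightarrow> P l x" for l using elim by (induction l) auto
    qed
  qed
qed

section \<open>Path sums over a ranked computation graph\<close>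

definition tgt :: "edge \<Rightarrow> node" where
  "tgt e = fst (snd e)"

definition edge_factor :: "(node \<Rightarrow> bool) \<Rightarrow> (widx \<Rightarrow> real) \<Rightarrow> edge \<Rightarrow> real" where
  "edge_factor act w = (\<lambda>(u, v, c, wo). c * (case wo of None \<Rightarrow> 1 | Some a \<Rightarrow> w a) * (if act v then 1 else 0))"

definition path_sum :: "edge set \<Rightarrow> node set \<Rightarrow> (node \<Rightarrow> real) \<Rightarrow> (node \<Rightarrow> bool) \<Rightarrow> (widx \<Rightarrow> real)
    \<Rightarrow> node \<Rightarrow> real" where
  "path_sum E ins xi act w v = (\<Sum>\<gamma>\<in>{\<gamma>. is_path E ins v \<gamma>}. path_term xi act w \<gamma>)"

lemma path_term_eq_prod_edge_factor:
  "path_term xi act w \<gamma> = xi (fst (hd \<gamma>)) * prod_list (map (edge_factor act w) \<gamma>)"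
  unfolding path_term_def edge_factor_def by simp

lemma is_path_iff_successively:
  "is_path E ins v \<gamma> \<longleftrightarrow> \<gamma> \<noteq> [] \<and> set \<gamma> \<subseteq> E \<and> fst (hd \<gamma>) \<in> ins \<and> tgt (last \<gamma>) = v
     \<and> successively (\<lambda>e e'. tgt e = fst e') \<gamma>"
  unfolding is_path_def successively_conv_nth tgt_def by simp

lemma is_path_singleton: "is_path E ins v [e] \<longleftrightarrow> e \<in> E \<and> fst e \<in> ins \<and> tgt e = v"
  unfolding is_path_def tgt_def by auto

lemma is_path_snoc:
  assumes "\<gamma> \<noteq> []"
  shows "is_path E ins v (\<gamma> @ [e]) \<longleftrightarrow> e \<in> E \<and> tgt e = v \<and> is_path E ins (fst e) \<gamma>"
  using assms by (auto simp: is_path_iff_successively successively_append_iff)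

lemma paths_snoc_decomposition:
  "{\<gamma>. is_path E ins v \<gamma>} = (\<lambda>e. [e]) ` {e \<in> E. tgt e = v \<and> fst e \<in> ins}
     \<union> (\<lambda>(e, \<gamma>). \<gamma> @ [e]) ` (SIGMA e:{e \<in> E. tgt e = v}. {\<gamma>. is_path E ins (fst e) \<gamma>})"
  (is "?P = ?S1 \<union> ?S2")
proof (intro equalityI subsetI)
  fix \<gamma> assume "\<gamma> \<in> ?P"
  then have path: "is_path E ins v \<gamma>" by simp
  then obtain \<gamma>' e where \<gamma>: "\<gamma> = \<gamma>' @ [e]" unfolding is_path_def by (metis rev_exhaust)
  show "\<gamma> \<in> ?S1 \<union> ?S2"
  proof (cases "\<gamma>' = []")
    case True
    then show ?thesis using path \<gamma> is_path_singleton by auto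
  next
    case False
    then have "e \<in> E \<and> tgt e = v \<and> is_path E ins (fst e) \<gamma>'" using path \<gamma> is_path_snoc by blast
    then show ?thesis using \<gamma> by force
  qed
next
  fix \<gamma> assume "\<gamma> \<in> ?S1 \<union> ?S2"
  then show "\<gamma> \<in> ?P"
  proof
    assume "\<gamma> \<in> ?S1" then show ?thesis using is_path_singleton by auto
  next
    assume "\<gamma> \<in> ?S2"
    then obtain e \<gamma>' where "\<gamma> = \<gamma>' @ [e]" "e \<in> E" "tgt e = v" "is_path E ins (fst e) \<gamma>'" by auto
    moreover then have "\<gamma>' \<noteq> []" by (simp add: is_path_def)
    ultimately show ?thesis using is_path_snoc by auto
  qed
qed

lemma finite_paths:
  assumes fin: "finite E" and rank: "\<forall>e\<in>E. rnk (fst e) < (rnk (tgt e) :: nat)"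
  shows "finite {\<gamma>. is_path E ins v \<gamma>}"
proof (induction "rnk v" arbitrary: v rule: less_induct)
  case less
  have "finite (SIGMA e:{e \<in> E. tgt e = v}. {\<gamma>. is_path E ins (fst e) \<gamma>})"
    using fin by (intro finite_SigmaI) (use rank in \<open>auto intro!: less\<close>)
  then show ?case using fin by (subst paths_snoc_decomposition) auto
qed

lemma path_sum_split_last_edge:
  assumes fin: "finite E" and rank: "\<forall>e\<in>E. rnk (fst e) < (rnk (tgt e) :: nat)"
  shows "path_sum E ins xi act w v = (\<Sum>e\<in>{e \<in> E. tgt e = v \<and> fst e \<in> ins}. path_term xi act w [e])
           + (\<Sum>(e, \<gamma>)\<in>(SIGMA e:{e \<in> E. tgt e = v}. {\<gamma>. is_path E ins (fst e) \<gamma>}). path_term xi act w (\<gamma> @ [e]))"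
proof -
  let ?S1 = "{e \<in> E. tgt e = v \<and> fst e \<in> ins}"
  let ?S2 = "SIGMA e:{e \<in> E. tgt e = v}. {\<gamma>. is_path E ins (fst e) \<gamma>}"
  have fin1: "finite ?S1" using fin by auto
  have fin2: "finite ?S2" using fin finite_paths[OF fin rank] by (intro finite_SigmaI) auto
  have disj: "(\<lambda>e. [e]) ` ?S1 \<inter> (\<lambda>(e, \<gamma>). \<gamma> @ [e]) ` ?S2 = {}"
    by (auto simp: is_path_def)
  have inj1: "inj_on (\<lambda>e. [e]) ?S1" by (auto intro: inj_onI)
  have inj2: "inj_on (\<lambda>(e, \<gamma>). \<gamma> @ [e]) ?S2" by (auto intro!: inj_onI)
  have "path_sum E ins xi act w v
      = sum (path_term xi act w) ((\<lambda>e. [e]) ` ?S1) + sum (path_term xi act w) ((\<lambda>(e, \<gamma>). \<gamma> @ [e]) ` ?S2)"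
    unfolding path_sum_def
    by (subst paths_snoc_decomposition, rule sum.union_disjoint) (use fin1 fin2 disj in auto)
  then show ?thesis
    unfolding sum.reindex[OF inj1] sum.reindex[OF inj2] by (simp add: comp_def case_prod_unfold)
qed

lemma path_sum_rec:
  assumes fin: "finite E" and rank: "\<forall>e\<in>E. rnk (fst e) < (rnk (tgt e) :: nat)"
  shows "path_sum E ins xi act w v = (\<Sum>e\<in>{e \<in> E. tgt e = v}. edge_factor act w e *
            ((if fst e \<in> ins then xi (fst e) else 0) + path_sum E ins xi act w (fst e)))"
proof -
  let ?In = "{e \<in> E. tgt e = v}"
  let ?S1 = "{e \<in> E. tgt e = v \<and> fst e \<in> ins}"
  let ?S2 = "SIGMA e:?In. {\<gamma>. is_path E ins (fst e) \<gamma>}"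
  have "path_sum E ins xi act w v = (\<Sum>e\<in>?S1. path_term xi act w [e])
       + (\<Sum>(e, \<gamma>)\<in>?S2. path_term xi act w (\<gamma> @ [e]))"
    by (rule path_sum_split_last_edge[OF fin rank])
  also have "(\<Sum>e\<in>?S1. path_term xi act w [e])
      = (\<Sum>e\<in>?In. edge_factor act w e * (if fst e \<in> ins then xi (fst e) else 0))"
  proof -
    have "(\<Sum>e\<in>?In. edge_factor act w e * (if fst e \<in> ins then xi (fst e) else 0))
        = (\<Sum>e\<in>?In. if fst e \<in> ins then edge_factor act w e * xi (fst e) else 0)"
      by (intro sum.cong) auto
    also have "\<dots> = (\<Sum>e\<in>{e \<in> ?In. fst e \<in> ins}. edge_factor act w e * xi (fst e))"
      using fin by (subst sum.inter_filter) auto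
    also have "{e \<in> ?In. fst e \<in> ins} = ?S1" by auto
    finally show ?thesis by (simp add: path_term_eq_prod_edge_factor mult.commute)
  qed
  also have "(\<Sum>(e, \<gamma>)\<in>?S2. path_term xi act w (\<gamma> @ [e]))
      = (\<Sum>e\<in>?In. \<Sum>\<gamma>\<in>{\<gamma>. is_path E ins (fst e) \<gamma>}. path_term xi act w (\<gamma> @ [e]))"
    by (rule sum.Sigma[symmetric]) (use fin finite_paths[OF fin rank] in auto)
  also have "\<dots> = (\<Sum>e\<in>?In. edge_factor act w e * path_sum E ins xi act w (fst e))"
    unfolding path_sum_def sum_distrib_left
  proof (intro sum.cong refl)
    fix e :: edge and \<gamma> assume "\<gamma> \<in> {\<gamma>. is_path E ins (fst e) \<gamma>}"
    then have "\<gamma> \<noteq> []" by (simp add: is_path_def)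
    then show "path_term xi act w (\<gamma> @ [e]) = edge_factor act w e * path_term xi act w \<gamma>"
      by (simp add: path_term_eq_prod_edge_factor)
  qed
  finally show ?thesis by (simp add: sum.distrib[symmetric] distrib_left)
qed

lemma path_sum_in_edges_image:
  assumes "finite E" and "\<forall>e\<in>E. rnk (fst e) < (rnk (tgt e) :: nat)"
    and in_edges: "{e \<in> E. tgt e = v} = g ` J" and inj: "inj_on g J"
  shows "path_sum E ins xi act w v = (\<Sum>j\<in>J. edge_factor act w (g j) *
            ((if fst (g j) \<in> ins then xi (fst (g j)) else 0) + path_sum E ins xi act w (fst (g j))))"
  using path_sum_rec[OF assms(1,2), of ins xi act w v] by (simp only: in_edges sum.reindex[OF inj] o_def)

lemma in_nodes_simps[simp]:
  "NIn j \<in> in_nodes d \<longleftrightarrow> j < d" "N l h i \<notin> in_nodes d" "NOut r \<notin> in_nodes d"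
  by (auto simp: in_nodes_def)

section \<open>Partial derivatives of f and f_k\<close>

lemma path_term_cong_act:
  assumes "set \<gamma> \<subseteq> E" and "\<And>v. v \<in> tgt ` E \<Longrightarrow> act v = act' v"
  shows "path_term xi act w \<gamma> = path_term xi act' w \<gamma>"
proof -
  have "edge_factor act w e = edge_factor act' w e" if "e \<in> set \<gamma>" for e
  proof -
    have "act (tgt e) = act' (tgt e)" using that assms by auto
    then show ?thesis unfolding edge_factor_def tgt_def by (auto split: prod.splits)
  qed
  then show ?thesis unfolding path_term_eq_prod_edge_factor by (metis map_cong)
qed

lemma path_term_cong_weights:
  assumes "\<And>e b. e \<in> set \<gamma> \<Longrightarrow> snd (snd (snd e)) = Some b \<Longrightarrow> w b = w' b"
  shows "path_term xi act w \<gamma> = path_term xi act w' \<gamma>"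
proof -
  have "edge_factor act w e = edge_factor act w' e" if "e \<in> set \<gamma>" for e
    using that assms[of e] unfolding edge_factor_def by (auto split: prod.splits option.splits)
  then show ?thesis unfolding path_term_eq_prod_edge_factor by (metis map_cong)
qed

lemma edge_factor_differentiable: "(\<lambda>t. edge_factor act (w(a := t)) e) differentiable (at t0)"
proof -
  obtain u v c wo where e: "e = (u, v, c, wo)" by (cases e)
  have "(\<lambda>t. (w(a := t)) b) differentiable (at t0)" for b
    by (cases "a = b") auto
  then show ?thesis
    unfolding e edge_factor_def by (cases wo) (auto intro!: differentiable_mult)
qed

lemma prod_list_map_differentiable:
  fixes g :: "real \<Rightarrow> 'a \<Rightarrow> real"
  assumes "\<And>e. e \<in> set xs \<Longrightarrow> (\<lambda>t. g t e) differentiable (at t0)"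
  shows "(\<lambda>t. prod_list (map (g t) xs)) differentiable (at t0)"
  using assms by (induction xs) (auto intro!: differentiable_mult)

lemma path_term_differentiable: "(\<lambda>t. path_term xi act (w(a := t)) \<gamma>) differentiable (at t0)"
proof -
  have "(\<lambda>t. prod_list (map (edge_factor act (w(a := t))) \<gamma>)) differentiable (at t0)"
    by (intro prod_list_map_differentiable edge_factor_differentiable)
  then show ?thesis unfolding path_term_eq_prod_edge_factor by (auto intro!: differentiable_mult)
qed

lemma path_sum_cong_act:
  "(\<And>v. v \<in> tgt ` E \<Longrightarrow> act v = act' v) \<Longrightarrow> path_sum E ins xi act w out = path_sum E ins xi act' w out"
  unfolding path_sum_def by (intro sum.cong refl path_term_cong_act[where E = E]) (auto simp: is_path_def)

lemma path_fk_cong_act: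
  "(\<And>v. v \<in> tgt ` E \<Longrightarrow> act v = act' v) \<Longrightarrow> path_fk E ins out xi act w k = path_fk E ins out xi act' w k"
  unfolding path_fk_def by (intro sum.cong refl path_term_cong_act[where E = E]) (auto simp: is_path_def)

text \<open>Paths avoiding W^k do not involve w a, so for a fixed activation pattern the path sum is
  f_k plus a constant as a function of w a.\<close>
lemma path_sum_update_eq_path_fk_plus_const:
  assumes fin: "finite E" and rank: "\<forall>e\<in>E. rnk (fst e) < (rnk (tgt e) :: nat)" and "fst a = k"
  shows "path_sum E ins xi act (w(a := t)) out = path_fk E ins out xi act (w(a := t)) k
           + (\<Sum>\<gamma>\<in>{\<gamma>. is_path E ins out \<gamma> \<and> \<not> uses_block k \<gamma>}. path_term xi act w \<gamma>)"
proof -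
  let ?P = "{\<gamma>. is_path E ins out \<gamma>}"
  let ?K = "{\<gamma>. is_path E ins out \<gamma> \<and> uses_block k \<gamma>}"
  have "path_sum E ins xi act (w(a := t)) out
      = path_fk E ins out xi act (w(a := t)) k + (\<Sum>\<gamma>\<in>?P - ?K. path_term xi act (w(a := t)) \<gamma>)"
    unfolding path_sum_def path_fk_def using finite_paths[OF fin rank]
    by (subst sum.subset_diff[of ?K]) auto
  also have "(\<Sum>\<gamma>\<in>?P - ?K. path_term xi act (w(a := t)) \<gamma>) = (\<Sum>\<gamma>\<in>?P - ?K. path_term xi act w \<gamma>)"
  proof (intro sum.cong refl path_term_cong_weights)
    fix \<gamma> e b assume "\<gamma> \<in> ?P - ?K" "e \<in> set \<gamma>" "snd (snd (snd e)) = Some b"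
    then have "b \<noteq> a" using \<open>fst a = k\<close> unfolding uses_block_def by blast
    then show "(w(a := t)) b = w b" by simp
  qed
  also have "?P - ?K = {\<gamma>. is_path E ins out \<gamma> \<and> \<not> uses_block k \<gamma>}" by blast
  finally show ?thesis .
qed

lemma path_fk_update_differentiable:
  assumes "finite E" and "\<forall>e\<in>E. rnk (fst e) < (rnk (tgt e) :: nat)"
  shows "(\<lambda>t. path_fk E ins out xi act (w(a := t)) k) differentiable (at t0)"
proof -
  have "finite {\<gamma>. is_path E ins out \<gamma> \<and> uses_block k \<gamma>}"
    using finite_paths[OF assms] by (rule finite_subset[rotated]) auto
  then show ?thesis
    unfolding path_fk_def by (intro differentiable_sum) (auto intro: path_term_differentiable)
qed

lemma path_sum_path_fk_same_derivative:
  fixes act :: "(widx \<Rightarrow> real) \<Rightarrow> node \<Rightarrow> bool"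
  assumes fin: "finite E" and rank: "\<forall>e\<in>E. rnk (fst e) < (rnk (tgt e) :: nat)"
    and "fst a = k"
    and act_const: "\<forall>\<^sub>F t in nhds (w a). \<forall>v\<in>tgt ` E. act (w(a := t)) v = act w v"
  shows "\<exists>D. ((\<lambda>t. path_sum E ins xi (act (w(a := t))) (w(a := t)) out) has_real_derivative D) (at (w a))
           \<and> ((\<lambda>t. path_fk E ins out xi (act (w(a := t))) (w(a := t)) k) has_real_derivative D) (at (w a))"
proof -
  let ?G = "\<lambda>t. path_fk E ins out xi (act w) (w(a := t)) k"
  let ?C = "\<Sum>\<gamma>\<in>{\<gamma>. is_path E ins out \<gamma> \<and> \<not> uses_block k \<gamma>}. path_term xi (act w) w \<gamma>"
  have G_deriv: "(?G has_real_derivative deriv ?G (w a)) (at (w a))"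
    using path_fk_update_differentiable[OF fin rank] by (simp add: DERIV_deriv_iff_real_differentiable)
  then have GC_deriv: "((\<lambda>t. ?G t + ?C) has_real_derivative deriv ?G (w a)) (at (w a))"
    by (auto intro!: derivative_eq_intros)
  have "\<forall>\<^sub>F t in nhds (w a). ?G t + ?C = path_sum E ins xi (act (w(a := t))) (w(a := t)) out"
    using act_const
  proof eventually_elim
    case (elim t)
    then have "path_sum E ins xi (act (w(a := t))) (w(a := t)) out = path_sum E ins xi (act w) (w(a := t)) out"
      by (intro path_sum_cong_act) auto
    then show ?case
      unfolding path_sum_update_eq_path_fk_plus_const[OF fin rank \<open>fst a = k\<close>] by simp
  qed
  from DERIV_cong_ev[OF refl this refl] GC_deriv
  have "((\<lambda>t. path_sum E ins xi (act (w(a := t))) (w(a := t)) out) has_real_derivative deriv ?G (w a))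
      (at (w a))"
    by blast
  moreover have "\<forall>\<^sub>F t in nhds (w a). ?G t = path_fk E ins out xi (act (w(a := t))) (w(a := t)) k"
    using act_const by eventually_elim (intro path_fk_cong_act, auto)
  from DERIV_cong_ev[OF refl this refl] G_deriv
  have "((\<lambda>t. path_fk E ins out xi (act (w(a := t))) (w(a := t)) k) has_real_derivative deriv ?G (w a))
      (at (w a))"
    by blast
  ultimately show ?thesis by blast
qed

lemma partials_agree_ae_if_act_locally_constant:
  fixes act :: "(widx \<Rightarrow> real) \<Rightarrow> node \<Rightarrow> bool"
  assumes fin: "finite E" and rank: "\<forall>e\<in>E. rnk (fst e) < (rnk (tgt e) :: nat)"
    and F_eq: "\<And>w. F w = path_sum E ins xi (act w) w out"
    and act_const: "AE w in lborel_on I. \<forall>a. \<forall>v\<in>tgt ` E. \<forall>\<^sub>F t in nhds (w a). act (w(a := t)) v = act w v"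
  shows "partials_agree_ae I F (\<lambda>w. path_fk E ins out xi (act w) w k) k"
  unfolding partials_agree_ae_def F_eq
  using act_const
proof eventually_elim
  case (elim w)
  show ?case
  proof (intro ballI impI)
    fix a assume "a \<in> I" "fst a = k"
    have "\<forall>\<^sub>F t in nhds (w a). \<forall>v\<in>tgt ` E. act (w(a := t)) v = act w v"
    proof (subst eventually_ball_finite_distrib)
      show "finite (tgt ` E)" using fin by simp
      show "\<forall>v\<in>tgt ` E. \<forall>\<^sub>F t in nhds (w a). act (w(a := t)) v = act w v" using elim by blast
    qed
    from path_sum_path_fk_same_derivative[OF fin rank \<open>fst a = k\<close> this] show "\<exists>D.
        ((\<lambda>t. path_sum E ins xi (act (w(a := t))) (w(a := t)) out) has_real_derivative D) (at (w a)) \<and>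
        ((\<lambda>t. path_fk E ins out xi (act (w(a := t))) (w(a := t)) k) has_real_derivative D) (at (w a))" .
  qed
qed

section \<open>Vanilla network\<close>

definition layer_rank :: "nat \<Rightarrow> node \<Rightarrow> nat" where
  "layer_rank L v = (case v of NIn _ \<Rightarrow> 0 | N l _ _ \<Rightarrow> Suc l | NOut _ \<Rightarrow> L + 2)"

context
  fixes d :: nat and n :: "nat \<Rightarrow> nat" and L dout :: nat and x :: "nat \<Rightarrow> real"
begin

lemma finite_van_idx: "finite (van_idx d n L dout)"
  unfolding van_idx_def
proof (intro finite_UnI)
  show "finite {(BIn, i, j) |i j. i < n 0 \<and> j < d}"
    by (rule finite_subset[of _ "(\<lambda>(i, j). (BIn, i, j)) ` ({..<n 0} \<times> {..<d})"]) force+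
  show "finite {(BMid l 0, i, j) |l i j. 1 \<le> l \<and> l \<le> L \<and> i < n l \<and> j < n (l - 1)}"
    by (rule finite_subset[of _ "\<Union>l\<in>{1..L}. (\<lambda>(i, j). (BMid l 0, i, j)) ` ({..<n l} \<times> {..<n (l - 1)})"])
       force+
  show "finite {(BOut, r, j) |r j. r < dout \<and> j < n L}"
    by (rule finite_subset[of _ "(\<lambda>(r, j). (BOut, r, j)) ` ({..<dout} \<times> {..<n L})"]) force+
qed

definition van_edge_of :: "widx \<Rightarrow> edge" where
  "van_edge_of a = (case a of
      (BIn, i, j) \<Rightarrow> (NIn j, N 0 0 i, 1 / sqrt (real (n 0)), Some a)
    | (BMid l _, i, j) \<Rightarrow>
        (N (l - 1) 0 j, N l 0 i, (if l - 1 = 0 then 1 else sqrt 2) / sqrt (real (n (l - 1))), Some a)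
    | (BOut, r, j) \<Rightarrow> (N L 0 j, NOut r, (if L = 0 then 1 else sqrt 2) / sqrt (real (n L)), Some a))"

lemma finite_van_edges: "finite (van_edges d n L dout)"
proof (rule finite_surj[OF finite_van_idx])
  show "van_edges d n L dout \<subseteq> van_edge_of ` van_idx d n L dout"
  proof
    fix e assume "e \<in> van_edges d n L dout"
    then show "e \<in> van_edge_of ` van_idx d n L dout"
      by (intro image_eqI[where x = "the (snd (snd (snd e)))"])
         (auto simp: van_edges_def van_idx_def van_edge_of_def)
  qed
qed

lemma van_edges_rank: "\<forall>e\<in>van_edges d n L dout. layer_rank L (fst e) < layer_rank L (tgt e)"
  by (auto simp: van_edges_def layer_rank_def tgt_def)

lemma van_in_edges_input: "{e \<in> van_edges d n L dout. tgt e = NIn j} = {}"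
  by (auto simp: van_edges_def tgt_def)

lemma van_in_edges_first:
  "i < n 0 \<Longrightarrow> {e \<in> van_edges d n L dout. tgt e = N 0 0 i}
     = (\<lambda>j. (NIn j, N 0 0 i, 1 / sqrt (real (n 0)), Some (BIn, i, j))) ` {..<d}"
  by (auto simp: van_edges_def tgt_def)

lemma van_in_edges_hidden:
  "1 \<le> l \<Longrightarrow> l \<le> L \<Longrightarrow> i < n l \<Longrightarrow> {e \<in> van_edges d n L dout. tgt e = N l 0 i}
     = (\<lambda>j. (N (l - 1) 0 j, N l 0 i, (if l - 1 = 0 then 1 else sqrt 2) / sqrt (real (n (l - 1))),
          Some (BMid l 0, i, j))) ` {..<n (l - 1)}"
  by (auto simp: van_edges_def tgt_def) (rule_tac x = l in exI; auto)+

lemma van_in_edges_output: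
  "r < dout \<Longrightarrow> {e \<in> van_edges d n L dout. tgt e = NOut r}
     = (\<lambda>j. (N L 0 j, NOut r, (if L = 0 then 1 else sqrt 2) / sqrt (real (n L)), Some (BOut, r, j))) ` {..<n L}"
  by (auto simp: van_edges_def tgt_def)

abbreviation van_path_sum :: "(widx \<Rightarrow> real) \<Rightarrow> node \<Rightarrow> real" where
  "van_path_sum w \<equiv> path_sum (van_edges d n L dout) (in_nodes d) (xin x) (van_act d n x w) w"

lemmas van_path_sum_in_edges_image =
  path_sum_in_edges_image[OF finite_van_edges van_edges_rank, where ins = "in_nodes d" and xi = "xin x"]

lemma van_path_sum_input: "van_path_sum w (NIn j) = 0"
  by (subst path_sum_rec[OF finite_van_edges van_edges_rank]) (simp only: van_in_edges_input sum.empty)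

lemma van_path_sum_hidden:
  "l \<le> L \<Longrightarrow> i < n l \<Longrightarrow>
     van_path_sum w (N l 0 i) = (if l = 0 then van_y d n x w 0 i else relu (van_s d n x w l i))"
proof (induction l arbitrary: i)
  case 0
  then show ?case
    by (subst van_path_sum_in_edges_image[OF van_in_edges_first])
       (auto intro: inj_onI simp: van_path_sum_input edge_factor_def van_act_def xin_def
         sum_distrib_left mult.assoc)
next
  case (Suc l)
  let ?c = "(if l = 0 then 1 else sqrt 2) / sqrt (real (n l))"
  let ?z = "(if 0 < van_s d n x w (Suc l) i then 1 else 0) :: real"
  have "van_path_sum w (N (Suc l) 0 i)
      = (\<Sum>j<n l. ?c * w (BMid (Suc l) 0, i, j) * ?z * van_path_sum w (N l 0 j))"
    using Suc.prems
    by (subst van_path_sum_in_edges_image[OF van_in_edges_hidden])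
       (auto intro: inj_onI simp: edge_factor_def van_act_def)
  also have "\<dots> = ?z * (\<Sum>j<n l. 1 / sqrt (real (n l)) * (w (BMid (Suc l) 0, i, j) * van_y d n x w l j))"
    unfolding sum_distrib_left using Suc.IH Suc.prems
    by (intro sum.cong refl) (cases l; simp add: van_s_def)
  also have "\<dots> = ?z * van_s d n x w (Suc l) i"
    by (simp add: van_s_def sum_distrib_left)
  finally show ?case by (simp add: relu_eq_indicator_mult)
qed

lemma van_f_eq_path_sum: "r < dout \<Longrightarrow> van_f d n L x w r = van_path_sum w (NOut r)"
proof -
  assume r: "r < dout"
  let ?c = "(if L = 0 then 1 else sqrt 2) / sqrt (real (n L))"
  have "van_path_sum w (NOut r) = (\<Sum>j<n L. w (BOut, r, j) * (?c * van_path_sum w (N L 0 j)))"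
    by (subst van_path_sum_in_edges_image[OF van_in_edges_output[OF r]])
       (auto intro: inj_onI simp: edge_factor_def van_act_def mult_ac)
  also have "\<dots> = (\<Sum>j<n L. 1 / sqrt (real (n L)) * (w (BOut, r, j) * van_y d n x w L j))"
    using van_path_sum_hidden[OF order.refl] by (intro sum.cong refl) (cases L; simp add: van_s_def)
  also have "\<dots> = van_f d n L x w r"
    by (simp add: van_f_def sum_distrib_left)
  finally show ?thesis by simp
qed

lemma van_y_update_indep:
  "fst a \<notin> insert BIn ((\<lambda>l'. BMid l' 0) ` {..l}) \<Longrightarrow> van_y d n x (w(a := t)) l = van_y d n x w l"
proof (induction l)
  case (Suc l)
  then have "van_y d n x (w(a := t)) l = van_y d n x w l" by (intro Suc.IH) auto
  moreover have "(w(a := t)) (BMid (Suc l) 0, i, j) = w (BMid (Suc l) 0, i, j)" for i j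
    using Suc.prems by (metis fun_upd_other fst_conv atMost_iff image_eqI insertCI order.refl)
  ultimately show ?case by (simp only: van_y.simps)
qed (auto intro!: ext sum.cong)

lemma van_y_update_later_indep: "l < l' \<Longrightarrow> van_y d n x (w((BMid l' 0, i, j) := t)) l = van_y d n x w l"
  by (rule van_y_update_indep) auto

lemma van_y_Suc_eq_relu: "van_y d n x w (Suc l) i = sqrt 2 * relu (van_s d n x w (Suc l) i)"
  by (simp add: van_s_def)

lemma van_y_measurable[measurable]: "(\<lambda>w. van_y d n x w l i) \<in> borel_measurable (lborel_on I)"
  by (induction l arbitrary: i) simp_all

lemma separately_continuous_van_y: "separately_continuous (\<lambda>w. van_y d n x w l i)"
  by (induction l arbitrary: i) (auto intro!: separately_continuous_intros)

lemma separately_continuous_van_s: "separately_continuous (\<lambda>w. van_s d n x w l i)"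
  unfolding van_s_def by (auto intro!: separately_continuous_intros separately_continuous_van_y)

lemma AE_zero_stable_van_y_first:
  "AE w in lborel_on (van_idx d n L dout). \<forall>i<n 0. zero_stable (\<lambda>w. van_y d n x w 0 i) w"
proof -
  have "AE w in lborel_on (van_idx d n L dout). \<forall>i\<in>{..<n 0}. zero_stable (\<lambda>w. van_y d n x w 0 i) w"
  proof (rule AE_finite_allI, simp)
    fix i assume i: "i \<in> {..<n 0}"
    have "AE w in lborel_on (van_idx d n L dout). (\<forall>j\<in>{..<d}. zero_stable (\<lambda>_. x j) w) \<longrightarrow>
        zero_stable (\<lambda>w. 1 / sqrt (real (n 0)) * (\<Sum>j\<in>{..<d}. w (BIn, i, j) * x j)) w"
      by (rule AE_zero_stable_linear[OF finite_van_idx]) (use i in \<open>auto intro: inj_onI simp: van_idx_def\<close>)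
    then show "AE w in lborel_on (van_idx d n L dout). zero_stable (\<lambda>w. van_y d n x w 0 i) w"
      by (simp add: zero_stable_const)
  qed
  then show ?thesis by (rule eventually_mono) auto
qed

lemma AE_zero_stable_van_s_step:
  assumes "Suc l \<le> L"
  shows "AE w in lborel_on (van_idx d n L dout). (\<forall>j<n l. zero_stable (\<lambda>w. van_y d n x w l j) w) \<longrightarrow>
           (\<forall>i<n (Suc l). zero_stable (\<lambda>w. van_s d n x w (Suc l) i) w)"
proof -
  have "AE w in lborel_on (van_idx d n L dout). \<forall>i\<in>{..<n (Suc l)}.
      (\<forall>j\<in>{..<n l}. zero_stable (\<lambda>w. van_y d n x w l j) w) \<longrightarrow> zero_stable (\<lambda>w. van_s d n x w (Suc l) i) w"
  proof (rule AE_finite_allI, simp)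
    fix i assume i: "i \<in> {..<n (Suc l)}"
    have "(\<lambda>w. van_s d n x w (Suc l) i)
        = (\<lambda>w. 1 / sqrt (real (n l)) * (\<Sum>j\<in>{..<n l}. w (BMid (Suc l) 0, i, j) * van_y d n x w l j))"
      by (simp add: van_s_def)
    then show "AE w in lborel_on (van_idx d n L dout).
        (\<forall>j\<in>{..<n l}. zero_stable (\<lambda>w. van_y d n x w l j) w) \<longrightarrow> zero_stable (\<lambda>w. van_s d n x w (Suc l) i) w"
      using i assms
      by (simp only:) (rule AE_zero_stable_linear[OF finite_van_idx];
          auto intro: inj_onI simp: van_idx_def van_y_update_later_indep)
  qed
  then show ?thesis by (rule eventually_mono) auto
qed

lemma AE_zero_stable_van_y:
  "AE w in lborel_on (van_idx d n L dout). \<forall>l\<le>L. \<forall>i<n l. zero_stable (\<lambda>w. van_y d n x w l i) w"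
proof (rule AE_nat_induct)
  show "AE w in lborel_on (van_idx d n L dout). \<forall>i<n 0. zero_stable (\<lambda>w. van_y d n x w 0 i) w"
    by (rule AE_zero_stable_van_y_first)
next
  fix l assume "l < L"
  with AE_zero_stable_van_s_step[of l]
  show "AE w in lborel_on (van_idx d n L dout). (\<forall>i<n l. zero_stable (\<lambda>w. van_y d n x w l i) w) \<longrightarrow>
      (\<forall>i<n (Suc l). zero_stable (\<lambda>w. van_y d n x w (Suc l) i) w)"
    unfolding van_y_Suc_eq_relu
    by (auto elim!: eventually_mono intro: zero_stable_mult_relu[OF separately_continuous_van_s])
qed

lemma AE_van_act_locally_constant:
  "AE w in lborel_on (van_idx d n L dout). \<forall>a. \<forall>v\<in>tgt ` van_edges d n L dout.
     \<forall>\<^sub>F t in nhds (w a). van_act d n x (w(a := t)) v = van_act d n x w v"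
proof -
  have "AE w in lborel_on (van_idx d n L dout). \<forall>l\<in>{..<L}. (\<forall>j<n l. zero_stable (\<lambda>w. van_y d n x w l j) w) \<longrightarrow>
           (\<forall>i<n (Suc l). zero_stable (\<lambda>w. van_s d n x w (Suc l) i) w)"
    using AE_zero_stable_van_s_step by (intro AE_finite_allI) auto
  with AE_zero_stable_van_y
  have "AE w in lborel_on (van_idx d n L dout). \<forall>l i. 1 \<le> l \<longrightarrow> l \<le> L \<longrightarrow> i < n l \<longrightarrow>
           zero_stable (\<lambda>w. van_s d n x w l i) w"
  proof eventually_elim
    case (elim w)
    show ?case
    proof (intro allI impI)
      fix l i assume "1 \<le> l" "l \<le> L" "i < n l"
      then obtain l' where "l = Suc l'" "l' < L" by (cases l) auto
      then show "zero_stable (\<lambda>w. van_s d n x w l i) w" using elim \<open>i < n l\<close> by auto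
    qed
  qed
  then show ?thesis
  proof eventually_elim
    case (elim w)
    show ?case
    proof (intro allI ballI)
      fix a v assume "v \<in> tgt ` van_edges d n L dout"
      then consider l i where "v = N l 0 i" "1 \<le> l" "l \<le> L" "i < n l" | i where "v = N 0 0 i"
        | r where "v = NOut r"
        by (auto simp: van_edges_def tgt_def)
      then show "\<forall>\<^sub>F t in nhds (w a). van_act d n x (w(a := t)) v = van_act d n x w v"
      proof cases
        case 1
        with elim zero_stable_eventually_pos_iff[OF separately_continuous_van_s] show ?thesis
          by (auto simp: van_act_def)
      qed (auto simp: van_act_def)
    qed
  qed
qed

theorem van_partials_agree_ae:
  assumes "r < dout"
  shows "partials_agree_ae (van_idx d n L dout) (\<lambda>w. van_f d n L x w r)
           (\<lambda>w. path_fk (van_edges d n L dout) (in_nodes d) (NOut r) (xin x) (van_act d n x w) w k) k"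
  using finite_van_edges van_edges_rank van_f_eq_path_sum[OF assms] AE_van_act_locally_constant
  by (rule partials_agree_ae_if_act_locally_constant)

end

section \<open>ResNet\<close>

text \<open>Within block l the sublayer nodes N l h (1 \<le> h \<le> m) are ranked between the block input
  N (l - 1) 0 and the block output N l 0.\<close>
definition res_rank :: "nat \<Rightarrow> nat \<Rightarrow> node \<Rightarrow> nat" where
  "res_rank m L v = (case v of
      NIn _ \<Rightarrow> 0
    | N l h _ \<Rightarrow> l * (m + 2) + (if h = 0 then m + 1 else h) + 1
    | NOut _ \<Rightarrow> (L + 1) * (m + 2) + 1)"

context
  fixes d n :: nat and nh :: "nat \<Rightarrow> nat \<Rightarrow> nat" and m L :: nat and \<alpha> :: "nat \<Rightarrow> real"
    and dout :: nat and x :: "nat \<Rightarrow> real"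
begin

lemma finite_res_idx: "finite (res_idx d n nh m L dout)"
  unfolding res_idx_def
proof (intro finite_UnI)
  show "finite {(BIn, i, j) |i j. i < n \<and> j < d}"
    by (rule finite_subset[of _ "(\<lambda>(i, j). (BIn, i, j)) ` ({..<n} \<times> {..<d})"]) force+
  show "finite {(BMid l h, i, j) |l h i j. 1 \<le> l \<and> l \<le> L \<and> 1 \<le> h \<and> h \<le> m
      \<and> i < rdim n nh m l h \<and> j < rdim n nh m l (h - 1)}"
    by (rule finite_subset[of _ "\<Union>l\<in>{1..L}. \<Union>h\<in>{1..m}. (\<lambda>(i, j). (BMid l h, i, j))
        ` ({..<rdim n nh m l h} \<times> {..<rdim n nh m l (h - 1)})"]) force+
  show "finite {(BOut, r, j) |r j. r < dout \<and> j < n}"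
    by (rule finite_subset[of _ "(\<lambda>(r, j). (BOut, r, j)) ` ({..<dout} \<times> {..<n})"]) force+
qed

lemma finite_res_edges: "finite (res_edges d n nh m L \<alpha> dout)"
  unfolding res_edges_def
proof (intro finite_UnI)
  show "finite {(NIn j, N 0 0 i, 1 / sqrt (real n), Some (BIn, i, j)) |i j. i < n \<and> j < d}"
    by (rule finite_subset[of _ "(\<lambda>(i, j). (NIn j, N 0 0 i, 1 / sqrt (real n), Some (BIn, i, j)))
        ` ({..<n} \<times> {..<d})"]) force+
  show "finite {(if h = 1 then N (l - 1) 0 j else N l (h - 1) j, N l h i,
        (if h = 1 then 1 else sqrt 2) / sqrt (real (rdim n nh m l (h - 1))), Some (BMid l h, i, j))
        |l h i j. 1 \<le> l \<and> l \<le> L \<and> 1 \<le> h \<and> h \<le> m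
          \<and> i < rdim n nh m l h \<and> j < rdim n nh m l (h - 1)}"
    by (rule finite_subset[of _ "\<Union>l\<in>{1..L}. \<Union>h\<in>{1..m}. (\<lambda>(i, j).
        (if h = 1 then N (l - 1) 0 j else N l (h - 1) j, N l h i,
         (if h = 1 then 1 else sqrt 2) / sqrt (real (rdim n nh m l (h - 1))), Some (BMid l h, i, j)))
        ` ({..<rdim n nh m l h} \<times> {..<rdim n nh m l (h - 1)})"]) force+
  show "finite {(N (l - 1) 0 i, N l 0 i, 1, None) |l i. 1 \<le> l \<and> l \<le> L \<and> i < n}"
    by (rule finite_subset[of _ "(\<lambda>(l, i). (N (l - 1) 0 i, N l 0 i, 1, None)) ` ({..L} \<times> {..<n})"])
       force+
  show "finite {(N l m i, N l 0 i, sqrt (\<alpha> l), None) |l i. 1 \<le> l \<and> l \<le> L \<and> i < n}"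
    by (rule finite_subset[of _ "(\<lambda>(l, i). (N l m i, N l 0 i, sqrt (\<alpha> l), None)) ` ({..L} \<times> {..<n})"])
       force+
  show "finite {(N L 0 j, NOut r, 1 / sqrt (real n), Some (BOut, r, j)) |r j. r < dout \<and> j < n}"
    by (rule finite_subset[of _ "(\<lambda>(r, j). (N L 0 j, NOut r, 1 / sqrt (real n), Some (BOut, r, j)))
        ` ({..<dout} \<times> {..<n})"]) force+
qed

text \<open>For m = 0 the second skip edge into N l 0 i would be a loop.\<close>
lemma res_edges_rank:
  assumes "1 \<le> m"
  shows "\<forall>e\<in>res_edges d n nh m L \<alpha> dout. res_rank m L (fst e) < res_rank m L (tgt e)"
proof -
  have "(l - 1) * (m + 2) + (m + 2) = l * (m + 2)" if "1 \<le> l" for l :: nat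
    using that by (cases l) auto
  then show ?thesis
    using assms unfolding res_edges_def res_rank_def tgt_def by (auto simp: algebra_simps)
qed

lemma res_in_edges_input: "{e \<in> res_edges d n nh m L \<alpha> dout. tgt e = NIn j} = {}"
  by (auto simp: res_edges_def tgt_def)

lemma res_in_edges_first:
  "i < n \<Longrightarrow> {e \<in> res_edges d n nh m L \<alpha> dout. tgt e = N 0 0 i}
     = (\<lambda>j. (NIn j, N 0 0 i, 1 / sqrt (real n), Some (BIn, i, j))) ` {..<d}"
  by (auto simp: res_edges_def tgt_def)

lemma res_in_edges_block_output:
  "1 \<le> l \<Longrightarrow> l \<le> L \<Longrightarrow> i < n \<Longrightarrow> {e \<in> res_edges d n nh m L \<alpha> dout. tgt e = N l 0 i}
     = {(N (l - 1) 0 i, N l 0 i, 1, None), (N l m i, N l 0 i, sqrt (\<alpha> l), None)}"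
  by (auto simp: res_edges_def tgt_def)

lemma res_in_edges_sublayer:
  assumes "1 \<le> l" "l \<le> L" "1 \<le> h" "h \<le> m" "i < rdim n nh m l h"
  shows "{e \<in> res_edges d n nh m L \<alpha> dout. tgt e = N l h i}
     = (\<lambda>j. (if h = 1 then N (l - 1) 0 j else N l (h - 1) j, N l h i,
          (if h = 1 then 1 else sqrt 2) / sqrt (real (rdim n nh m l (h - 1))), Some (BMid l h, i, j)))
         ` {..<rdim n nh m l (h - 1)}"
  using assms by (auto simp: res_edges_def tgt_def) blast

lemma res_in_edges_output:
  "r < dout \<Longrightarrow> {e \<in> res_edges d n nh m L \<alpha> dout. tgt e = NOut r}
     = (\<lambda>j. (N L 0 j, NOut r, 1 / sqrt (real n), Some (BOut, r, j))) ` {..<n}"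
  by (auto simp: res_edges_def tgt_def)

abbreviation res_path_sum :: "(widx \<Rightarrow> real) \<Rightarrow> node \<Rightarrow> real" where
  "res_path_sum w \<equiv> path_sum (res_edges d n nh m L \<alpha> dout) (in_nodes d) (xin x) (res_act d n nh m \<alpha> x w) w"

definition res_inner_input :: "(widx \<Rightarrow> real) \<Rightarrow> nat \<Rightarrow> (nat \<Rightarrow> real) \<Rightarrow> nat \<Rightarrow> nat \<Rightarrow> real" where
  "res_inner_input w l yp h j = (if h = 1 then yp j else sqrt 2 * relu (res_inner n nh m w l yp (h - 1) j))"

lemma res_inner_eq:
  "1 \<le> h \<Longrightarrow> res_inner n nh m w l yp h i = 1 / sqrt (real (rdim n nh m l (h - 1))) *
     (\<Sum>j<rdim n nh m l (h - 1). w (BMid l h, i, j) * res_inner_input w l yp h j)"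
proof (cases h)
  case (Suc h')
  then show ?thesis by (cases h') (simp_all add: res_inner_input_def rdim_def)
qed simp

context
  assumes m: "1 \<le> m"
begin

lemmas res_path_sum_in_edges_image =
  path_sum_in_edges_image[OF finite_res_edges res_edges_rank[OF m], where ins = "in_nodes d" and xi = "xin x"]

lemma res_path_sum_input: "res_path_sum w (NIn j) = 0"
  by (subst path_sum_rec[OF finite_res_edges res_edges_rank[OF m]]) (simp only: res_in_edges_input sum.empty)

lemma res_path_sum_sublayer:
  assumes l: "1 \<le> l" "l \<le> L"
    and block_input: "\<And>j. j < n \<Longrightarrow> res_path_sum w (N (l - 1) 0 j) = res_y d n nh m \<alpha> x w (l - 1) j"
  shows "1 \<le> h \<Longrightarrow> h \<le> m \<Longrightarrow> i < rdim n nh m l h \<Longrightarrow> res_path_sum w (N l h i) =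
     (if h < m then relu (res_inner n nh m w l (res_y d n nh m \<alpha> x w (l - 1)) h i)
      else res_inner n nh m w l (res_y d n nh m \<alpha> x w (l - 1)) h i)"
proof (induction h arbitrary: i)
  case (Suc h)
  let ?yp = "res_y d n nh m \<alpha> x w (l - 1)"
  let ?s = "res_inner n nh m w l ?yp (Suc h) i"
  let ?R = "rdim n nh m l h"
  let ?c = "(if h = 0 then 1 else sqrt 2) / sqrt (real ?R)"
  let ?src = "\<lambda>j. if h = 0 then N (l - 1) 0 j else N l h j"
  let ?z = "(if res_act d n nh m \<alpha> x w (N l (Suc h) i) then 1 else 0) :: real"
  have src: "?c * res_path_sum w (?src j) = 1 / sqrt (real ?R) * res_inner_input w l ?yp (Suc h) j"
    if "j < ?R" for j
  proof (cases h)
    case 0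
    with that block_input show ?thesis by (simp add: res_inner_input_def rdim_def)
  next
    case (Suc h')
    with that Suc.IH[of j] Suc.prems show ?thesis by (simp add: res_inner_input_def)
  qed
  have "res_path_sum w (N l (Suc h) i) = (\<Sum>j<?R. ?c * w (BMid l (Suc h), i, j) * ?z * res_path_sum w (?src j))"
    using l Suc.prems
    by (subst res_path_sum_in_edges_image[OF res_in_edges_sublayer])
       (auto intro: inj_onI simp: edge_factor_def)
  also have "\<dots> = ?z * (\<Sum>j<?R. w (BMid l (Suc h), i, j) * (?c * res_path_sum w (?src j)))"
    by (simp add: sum_distrib_left mult_ac)
  also have "\<dots> = ?z * ?s"
    using src by (simp add: res_inner_eq[of "Suc h"] sum_distrib_left mult_ac)
  also have "\<dots> = (if Suc h < m then relu ?s else ?s)"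
    by (auto simp: res_act_def relu_def)
  finally show ?case .
qed simp

lemma res_path_sum_block_output: "l \<le> L \<Longrightarrow> i < n \<Longrightarrow> res_path_sum w (N l 0 i) = res_y d n nh m \<alpha> x w l i"
proof (induction l arbitrary: i)
  case 0
  then show ?case
    by (subst res_path_sum_in_edges_image[OF res_in_edges_first])
       (auto intro: inj_onI simp: res_path_sum_input edge_factor_def res_act_def xin_def
         sum_distrib_left mult.assoc)
next
  case (Suc l)
  have last_sublayer: "res_path_sum w (N (Suc l) m i) = res_inner n nh m w (Suc l) (res_y d n nh m \<alpha> x w l) m i"
    using res_path_sum_sublayer[of "Suc l" w m i] Suc m by (simp add: rdim_def)
  have "res_path_sum w (N (Suc l) 0 i) = res_path_sum w (N l 0 i) + sqrt (\<alpha> (Suc l)) * res_path_sum w (N (Suc l) m i)"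
    using Suc.prems
    by (subst path_sum_rec[OF finite_res_edges res_edges_rank[OF m]], subst res_in_edges_block_output)
       (auto simp: edge_factor_def res_act_def)
  then show ?case using Suc last_sublayer by simp
qed

lemma res_f_eq_path_sum: "r < dout \<Longrightarrow> res_f d n nh m L \<alpha> x w r = res_path_sum w (NOut r)"
  by (subst res_path_sum_in_edges_image[OF res_in_edges_output])
     (auto intro: inj_onI intro!: sum.cong simp: edge_factor_def res_act_def res_f_def
       res_path_sum_block_output sum_distrib_left mult_ac)

end

lemma res_inner_update_indep:
  "(\<And>h'. 1 \<le> h' \<Longrightarrow> h' \<le> h \<Longrightarrow> fst a \<noteq> BMid l h') \<Longrightarrow>
     res_inner n nh m (w(a := t)) l yp h i = res_inner n nh m w l yp h i"
proof (induction h arbitrary: i)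
  case (Suc h)
  have "res_inner n nh m (w(a := t)) l yp h j = res_inner n nh m w l yp h j" for j
    using Suc.prems by (intro Suc.IH) auto
  moreover have "(w(a := t)) (BMid l (Suc h), i, j) = w (BMid l (Suc h), i, j)" for i j
  proof -
    have "a \<noteq> (BMid l (Suc h), i, j)" using Suc.prems[of "Suc h"] by auto
    then show ?thesis by simp
  qed
  ultimately show ?case
    by (simp only: res_inner_eq[of "Suc h"] res_inner_input_def le_add1 plus_1_eq_Suc diff_Suc_1)
qed simp

lemma res_y_update_indep:
  "fst a \<notin> insert BIn {BMid l' h |l' h. l' \<le> l} \<Longrightarrow>
     res_y d n nh m \<alpha> x (w(a := t)) l = res_y d n nh m \<alpha> x w l"
proof (induction l)
  case (Suc l)
  have "res_y d n nh m \<alpha> x (w(a := t)) l = res_y d n nh m \<alpha> x w l"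
    using Suc.prems by (intro Suc.IH) auto
  moreover have "res_inner n nh m (w(a := t)) (Suc l) (res_y d n nh m \<alpha> x w l) m i
      = res_inner n nh m w (Suc l) (res_y d n nh m \<alpha> x w l) m i" for i
    using Suc.prems by (intro res_inner_update_indep) auto
  ultimately show ?case by (simp only: res_y.simps)
qed (auto intro!: ext sum.cong)

lemma res_y_update_later_indep:
  "l < l' \<Longrightarrow> res_y d n nh m \<alpha> x (w((BMid l' h, i, j) := t)) l = res_y d n nh m \<alpha> x w l"
  by (rule res_y_update_indep) auto

lemma res_inner_input_update_indep:
  assumes "h \<le> h'"
  shows "res_inner_input (w((BMid (Suc p) h', i, j) := t)) (Suc p)
           (res_y d n nh m \<alpha> x (w((BMid (Suc p) h', i, j) := t)) p) h j'
         = res_inner_input w (Suc p) (res_y d n nh m \<alpha> x w p) h j'"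
proof -
  have "res_inner n nh m (w((BMid (Suc p) h', i, j) := t)) (Suc p) (res_y d n nh m \<alpha> x w p) (h - 1) j'
      = res_inner n nh m w (Suc p) (res_y d n nh m \<alpha> x w p) (h - 1) j'"
    using assms by (intro res_inner_update_indep) auto
  then show ?thesis by (simp add: res_inner_input_def res_y_update_later_indep)
qed

lemma res_inner_measurable:
  assumes "\<And>j. (\<lambda>w. Y w j) \<in> borel_measurable (lborel_on I)"
  shows "(\<lambda>w. res_inner n nh m w l (Y w) h i) \<in> borel_measurable (lborel_on I)"
proof (induction h arbitrary: i)
  case (Suc h)
  have "(\<lambda>w. relu (res_inner n nh m w l (Y w) h j)) \<in> borel_measurable (lborel_on I)" for j
    using measurable_compose[OF Suc.IH relu_measurable] by (simp add: o_def)
  with assms show ?case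
    by (cases h) (simp_all del: res_inner.simps add: res_inner.simps(2,3))
qed (simp add: assms)

lemma res_y_measurable[measurable]: "(\<lambda>w. res_y d n nh m \<alpha> x w l i) \<in> borel_measurable (lborel_on I)"
proof (induction l arbitrary: i)
  case (Suc l)
  then show ?case unfolding res_y.simps
    by (intro borel_measurable_add borel_measurable_times borel_measurable_const res_inner_measurable)
qed simp

lemma res_inner_input_measurable[measurable]:
  "(\<lambda>w. res_inner_input w l (res_y d n nh m \<alpha> x w l') h j) \<in> borel_measurable (lborel_on I)"
  using measurable_compose[OF res_inner_measurable[OF res_y_measurable] relu_measurable]
  by (simp add: res_inner_input_def o_def)

lemma separately_continuous_res_inner:
  assumes "\<And>j. separately_continuous (\<lambda>w. Y w j)"
  shows "separately_continuous (\<lambda>w. res_inner n nh m w l (Y w) h i)"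
proof (induction h arbitrary: i)
  case (Suc h)
  with assms show ?case
    by (cases h) (simp_all del: res_inner.simps add: res_inner.simps(2,3) separately_continuous_intros)
qed (simp add: assms)

lemma separately_continuous_res_y: "separately_continuous (\<lambda>w. res_y d n nh m \<alpha> x w l i)"
proof (induction l arbitrary: i)
  case (Suc l)
  then show ?case by (simp add: separately_continuous_intros separately_continuous_res_inner)
qed (simp add: separately_continuous_intros)

text \<open>The pre-activation y^{p,h} of the paper: a block is indexed here by its input layer p, so
  it is block p + 1 of res_y and res_act.\<close>
abbreviation res_sublayer :: "(widx \<Rightarrow> real) \<Rightarrow> nat \<Rightarrow> nat \<Rightarrow> nat \<Rightarrow> real" where
  "res_sublayer w p h i \<equiv> res_inner n nh m w (Suc p) (res_y d n nh m \<alpha> x w p) h i"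

lemma separately_continuous_res_sublayer: "separately_continuous (\<lambda>w. res_sublayer w p h i)"
  by (intro separately_continuous_res_inner separately_continuous_res_y)

lemma zero_stable_res_inner_input:
  assumes "1 \<le> h" "j < rdim n nh m (Suc p) (h - 1)"
    and block_input: "\<forall>j<n. zero_stable (\<lambda>w. res_y d n nh m \<alpha> x w p j) w"
    and previous: "2 \<le> h \<longrightarrow> zero_stable (\<lambda>w. res_sublayer w p (h - 1) j) w"
  shows "zero_stable (\<lambda>w. res_inner_input w (Suc p) (res_y d n nh m \<alpha> x w p) h j) w"
proof (cases "h = 1")
  case True
  with assms show ?thesis by (simp add: res_inner_input_def rdim_def)
next
  case False
  with assms have "zero_stable (\<lambda>w. sqrt 2 * relu (res_sublayer w p (h - 1) j)) w"
    by (intro zero_stable_mult_relu separately_continuous_res_sublayer) auto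
  with False show ?thesis by (simp add: res_inner_input_def)
qed

lemma AE_zero_stable_res_sublayer_step:
  assumes p: "Suc p \<le> L" and h: "1 \<le> h" "h \<le> m"
  shows "AE w in lborel_on (res_idx d n nh m L dout).
           (\<forall>j<n. zero_stable (\<lambda>w. res_y d n nh m \<alpha> x w p j) w) \<longrightarrow>
           (2 \<le> h \<longrightarrow> (\<forall>j<rdim n nh m (Suc p) (h - 1). zero_stable (\<lambda>w. res_sublayer w p (h - 1) j) w)) \<longrightarrow>
           (\<forall>i<rdim n nh m (Suc p) h. zero_stable (\<lambda>w. res_sublayer w p h i) w)"
proof -
  let ?R = "rdim n nh m (Suc p) (h - 1)"
  let ?u = "\<lambda>j w. res_inner_input w (Suc p) (res_y d n nh m \<alpha> x w p) h j"
  have "AE w in lborel_on (res_idx d n nh m L dout). \<forall>i\<in>{..<rdim n nh m (Suc p) h}.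
      (\<forall>j\<in>{..<?R}. zero_stable (?u j) w) \<longrightarrow> zero_stable (\<lambda>w. res_sublayer w p h i) w"
  proof (rule AE_finite_allI, simp)
    fix i assume i: "i \<in> {..<rdim n nh m (Suc p) h}"
    have "AE w in lborel_on (res_idx d n nh m L dout). (\<forall>j\<in>{..<?R}. zero_stable (?u j) w) \<longrightarrow>
        zero_stable (\<lambda>w. 1 / sqrt (real ?R) * (\<Sum>j\<in>{..<?R}. w (BMid (Suc p) h, i, j) * ?u j w)) w"
    proof (rule AE_zero_stable_linear[OF finite_res_idx])
      have "1 \<le> Suc p" by simp
      then show "(\<lambda>j. (BMid (Suc p) h, i, j)) ` {..<?R} \<subseteq> res_idx d n nh m L dout"
        using p h i unfolding res_idx_def by blast
      show "?u j \<in> borel_measurable (lborel_on (res_idx d n nh m L dout))" for j by measurable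
      show "?u j (w((BMid (Suc p) h, i, j') := t)) = ?u j w" for j j' w t
        by (rule res_inner_input_update_indep[OF order.refl])
    qed (auto intro: inj_onI)
    then show "AE w in lborel_on (res_idx d n nh m L dout).
        (\<forall>j\<in>{..<?R}. zero_stable (?u j) w) \<longrightarrow> zero_stable (\<lambda>w. res_sublayer w p h i) w"
      using h by (simp only: res_inner_eq)
  qed
  then show ?thesis
  proof eventually_elim
    case (elim w)
    show ?case
    proof (intro impI allI)
      assume y: "\<forall>j<n. zero_stable (\<lambda>w. res_y d n nh m \<alpha> x w p j) w"
        and previous: "2 \<le> h \<longrightarrow> (\<forall>j<?R. zero_stable (\<lambda>w. res_sublayer w p (h - 1) j) w)"
      have "zero_stable (?u j) w" if "j < ?R" for j
        using zero_stable_res_inner_input[OF h(1) that y] previous that by blast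
      then show "zero_stable (\<lambda>w. res_sublayer w p h i) w" if "i < rdim n nh m (Suc p) h" for i
        using elim that by blast
    qed
  qed
qed

lemma AE_zero_stable_res_block:
  assumes p: "Suc p \<le> L"
  shows "AE w in lborel_on (res_idx d n nh m L dout).
           (\<forall>j<n. zero_stable (\<lambda>w. res_y d n nh m \<alpha> x w p j) w) \<longrightarrow>
           (\<forall>h. 1 \<le> h \<longrightarrow> h \<le> m \<longrightarrow> (\<forall>i<rdim n nh m (Suc p) h. zero_stable (\<lambda>w. res_sublayer w p h i) w))"
proof -
  let ?Y = "\<lambda>w. \<forall>j<n. zero_stable (\<lambda>w. res_y d n nh m \<alpha> x w p j) w"
  let ?P = "\<lambda>h w. ?Y w \<longrightarrow> 1 \<le> h \<longrightarrow> (\<forall>i<rdim n nh m (Suc p) h. zero_stable (\<lambda>w. res_sublayer w p h i) w)"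
  have "AE w in lborel_on (res_idx d n nh m L dout). \<forall>h\<le>m. ?P h w"
  proof (rule AE_nat_induct)
    fix h assume "h < m"
    with AE_zero_stable_res_sublayer_step[OF p, of "Suc h"]
    show "AE w in lborel_on (res_idx d n nh m L dout). ?P h w \<longrightarrow> ?P (Suc h) w"
      by (auto elim!: eventually_mono)
  qed simp
  then show ?thesis by (rule eventually_mono) blast
qed

lemma AE_zero_stable_res_y_first:
  "AE w in lborel_on (res_idx d n nh m L dout). \<forall>i<n. zero_stable (\<lambda>w. res_y d n nh m \<alpha> x w 0 i) w"
proof -
  have "AE w in lborel_on (res_idx d n nh m L dout). \<forall>i\<in>{..<n}. zero_stable (\<lambda>w. res_y d n nh m \<alpha> x w 0 i) w"
  proof (rule AE_finite_allI, simp)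
    fix i assume i: "i \<in> {..<n}"
    have "AE w in lborel_on (res_idx d n nh m L dout). (\<forall>j\<in>{..<d}. zero_stable (\<lambda>_. x j) w) \<longrightarrow>
        zero_stable (\<lambda>w. 1 / sqrt (real n) * (\<Sum>j\<in>{..<d}. w (BIn, i, j) * x j)) w"
      by (rule AE_zero_stable_linear[OF finite_res_idx]) (use i in \<open>auto intro: inj_onI simp: res_idx_def\<close>)
    then show "AE w in lborel_on (res_idx d n nh m L dout). zero_stable (\<lambda>w. res_y d n nh m \<alpha> x w 0 i) w"
      by (simp add: zero_stable_const)
  qed
  then show ?thesis by (rule eventually_mono) auto
qed

context
  assumes m: "1 \<le> m"
begin

lemma AE_zero_stable_res_block_output:
  assumes l: "Suc l \<le> L"
  shows "AE w in lborel_on (res_idx d n nh m L dout). \<forall>i<n.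
           zero_stable (\<lambda>w. res_y d n nh m \<alpha> x w l i) w \<longrightarrow>
           (\<forall>j<rdim n nh m (Suc l) (m - 1).
              zero_stable (\<lambda>w. res_inner_input w (Suc l) (res_y d n nh m \<alpha> x w l) m j) w) \<longrightarrow>
           zero_stable (\<lambda>w. res_y d n nh m \<alpha> x w (Suc l) i) w"
proof -
  let ?R = "rdim n nh m (Suc l) (m - 1)"
  let ?u = "\<lambda>j w. sqrt (\<alpha> (Suc l)) / sqrt (real ?R) * res_inner_input w (Suc l) (res_y d n nh m \<alpha> x w l) m j"
  have "AE w in lborel_on (res_idx d n nh m L dout). \<forall>i\<in>{..<n}.
      zero_stable (\<lambda>w. res_y d n nh m \<alpha> x w l i) w \<longrightarrow> (\<forall>j\<in>{..<?R}. zero_stable (?u j) w) \<longrightarrow>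
      zero_stable (\<lambda>w. res_y d n nh m \<alpha> x w (Suc l) i) w"
  proof (rule AE_finite_allI, simp)
    fix i assume i: "i \<in> {..<n}"
    have "AE w in lborel_on (res_idx d n nh m L dout). zero_stable (\<lambda>w. res_y d n nh m \<alpha> x w l i) w \<longrightarrow>
        (\<forall>j\<in>{..<?R}. zero_stable (?u j) w) \<longrightarrow>
        zero_stable (\<lambda>w. res_y d n nh m \<alpha> x w l i + (\<Sum>j\<in>{..<?R}. w (BMid (Suc l) m, i, j) * ?u j w)) w"
    proof (rule AE_zero_stable_affine[OF finite_res_idx])
      have "1 \<le> Suc l" "m \<le> m" "i < rdim n nh m (Suc l) m" using i by (simp_all add: rdim_def)
      then show "(\<lambda>j. (BMid (Suc l) m, i, j)) ` {..<?R} \<subseteq> res_idx d n nh m L dout"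
        using l m unfolding res_idx_def by blast
      show "?u j \<in> borel_measurable (lborel_on (res_idx d n nh m L dout))" for j by measurable
      show "?u j (w((BMid (Suc l) m, i, j') := t)) = ?u j w" for j j' w t
        by (simp only: res_inner_input_update_indep[OF order.refl])
      show "res_y d n nh m \<alpha> x (w((BMid (Suc l) m, i, j') := t)) l i = res_y d n nh m \<alpha> x w l i" for j' w t
        by (simp add: res_y_update_later_indep)
    qed (auto intro: inj_onI)
    moreover have "res_y d n nh m \<alpha> x w (Suc l) i
        = res_y d n nh m \<alpha> x w l i + (\<Sum>j\<in>{..<?R}. w (BMid (Suc l) m, i, j) * ?u j w)" for w
      using m by (simp add: res_inner_eq sum_distrib_left mult_ac)
    ultimately show "AE w in lborel_on (res_idx d n nh m L dout).
        zero_stable (\<lambda>w. res_y d n nh m \<alpha> x w l i) w \<longrightarrow> (\<forall>j\<in>{..<?R}. zero_stable (?u j) w) \<longrightarrow>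
        zero_stable (\<lambda>w. res_y d n nh m \<alpha> x w (Suc l) i) w"
      by simp
  qed
  then show ?thesis
  proof eventually_elim
    case (elim w)
    show ?case
    proof (intro allI impI)
      fix i assume "i < n" "zero_stable (\<lambda>w. res_y d n nh m \<alpha> x w l i) w"
        and "\<forall>j<?R. zero_stable (\<lambda>w. res_inner_input w (Suc l) (res_y d n nh m \<alpha> x w l) m j) w"
      moreover from this(3) have "\<forall>j\<in>{..<?R}. zero_stable (?u j) w"
        using zero_stable_mult_left by blast
      ultimately show "zero_stable (\<lambda>w. res_y d n nh m \<alpha> x w (Suc l) i) w" using elim by blast
    qed
  qed
qed

lemma AE_zero_stable_res_y_step:
  assumes l: "Suc l \<le> L"
  shows "AE w in lborel_on (res_idx d n nh m L dout).
           (\<forall>j<n. zero_stable (\<lambda>w. res_y d n nh m \<alpha> x w l j) w) \<longrightarrow>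
           (\<forall>i<n. zero_stable (\<lambda>w. res_y d n nh m \<alpha> x w (Suc l) i) w)"
  using AE_zero_stable_res_block_output[OF l] AE_zero_stable_res_block[OF l]
proof eventually_elim
  case (elim w)
  show ?case
  proof (intro impI allI)
    assume y: "\<forall>j<n. zero_stable (\<lambda>w. res_y d n nh m \<alpha> x w l j) w"
    have "zero_stable (\<lambda>w. res_inner_input w (Suc l) (res_y d n nh m \<alpha> x w l) m j) w"
      if "j < rdim n nh m (Suc l) (m - 1)" for j
    proof (rule zero_stable_res_inner_input[OF m that y], intro impI)
      assume "2 \<le> m"
      with elim y that show "zero_stable (\<lambda>w. res_sublayer w l (m - 1) j) w" by auto
    qed
    then show "zero_stable (\<lambda>w. res_y d n nh m \<alpha> x w (Suc l) i) w" if "i < n" for i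
      using elim y that by blast
  qed
qed

lemma AE_zero_stable_res_y:
  "AE w in lborel_on (res_idx d n nh m L dout). \<forall>l\<le>L. \<forall>i<n. zero_stable (\<lambda>w. res_y d n nh m \<alpha> x w l i) w"
proof (rule AE_nat_induct)
  show "AE w in lborel_on (res_idx d n nh m L dout). \<forall>i<n. zero_stable (\<lambda>w. res_y d n nh m \<alpha> x w 0 i) w"
    by (rule AE_zero_stable_res_y_first)
  show "AE w in lborel_on (res_idx d n nh m L dout). (\<forall>i<n. zero_stable (\<lambda>w. res_y d n nh m \<alpha> x w l i) w) \<longrightarrow>
      (\<forall>i<n. zero_stable (\<lambda>w. res_y d n nh m \<alpha> x w (Suc l) i) w)" if "l < L" for l
    using that by (intro AE_zero_stable_res_y_step) simp
qed


lemma AE_res_act_locally_constant: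
  "AE w in lborel_on (res_idx d n nh m L dout). \<forall>a. \<forall>v\<in>tgt ` res_edges d n nh m L \<alpha> dout.
           \<forall>\<^sub>F t in nhds (w a). res_act d n nh m \<alpha> x (w(a := t)) v = res_act d n nh m \<alpha> x w v"
proof -
  have "AE w in lborel_on (res_idx d n nh m L dout). \<forall>p\<in>{..<L}.
      (\<forall>j<n. zero_stable (\<lambda>w. res_y d n nh m \<alpha> x w p j) w) \<longrightarrow>
      (\<forall>h. 1 \<le> h \<longrightarrow> h \<le> m \<longrightarrow> (\<forall>i<rdim n nh m (Suc p) h. zero_stable (\<lambda>w. res_sublayer w p h i) w))"
    using AE_zero_stable_res_block by (intro AE_finite_allI) auto
  with AE_zero_stable_res_y
  have "AE w in lborel_on (res_idx d n nh m L dout). \<forall>p h i. p < L \<longrightarrow> 1 \<le> h \<longrightarrow> h \<le> m \<longrightarrow>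
      i < rdim n nh m (Suc p) h \<longrightarrow> zero_stable (\<lambda>w. res_sublayer w p h i) w"
    by eventually_elim auto
  then show ?thesis
  proof eventually_elim
    case (elim w)
    show ?case
    proof (intro allI ballI)
      fix a v assume "v \<in> tgt ` res_edges d n nh m L \<alpha> dout"
      then consider l i where "v = N l 0 i"
        | l h i where "v = N l h i" "1 \<le> l" "l \<le> L" "1 \<le> h" "h \<le> m" "i < rdim n nh m l h"
        | r where "v = NOut r"
        by (auto simp: res_edges_def tgt_def)
      then show "\<forall>\<^sub>F t in nhds (w a). res_act d n nh m \<alpha> x (w(a := t)) v = res_act d n nh m \<alpha> x w v"
      proof cases
        case (2 l h i)
        then obtain p where p: "l = Suc p" "p < L" by (cases l) auto
        have "\<forall>\<^sub>F t in nhds (w a). (0 < res_sublayer (w(a := t)) p h i) = (0 < res_sublayer w p h i)"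
          using elim 2 p by (intro zero_stable_eventually_pos_iff[OF separately_continuous_res_sublayer]) auto
        then show ?thesis unfolding 2(1) p(1) res_act_def by (rule eventually_mono) simp
      qed (simp_all add: res_act_def)
    qed
  qed
qed

theorem res_partials_agree_ae:
  assumes "r < dout"
  shows "partials_agree_ae (res_idx d n nh m L dout) (\<lambda>w. res_f d n nh m L \<alpha> x w r)
           (\<lambda>w. path_fk (res_edges d n nh m L \<alpha> dout) (in_nodes d) (NOut r) (xin x) (res_act d n nh m \<alpha> x w) w k) k"
  using finite_res_edges res_edges_rank[OF m] res_f_eq_path_sum[OF m assms] AE_res_act_locally_constant
  by (rule partials_agree_ae_if_act_locally_constant)

end

end

section \<open>DenseNet\<close>

context
  fixes d :: nat and n :: "nat \<Rightarrow> nat" and L :: nat and \<alpha> :: real and dout :: nat and x :: "nat \<Rightarrow> real"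
begin

lemma finite_dense_idx: "finite (dense_idx d n L dout)"
  unfolding dense_idx_def
proof (intro finite_UnI)
  show "finite {(BIn, i, j) |i j. i < n 0 \<and> j < d}"
    by (rule finite_subset[of _ "(\<lambda>(i, j). (BIn, i, j)) ` ({..<n 0} \<times> {..<d})"]) force+
  show "finite {(BMid l h, i, j) |l h i j. 1 \<le> l \<and> l \<le> L \<and> h < l \<and> i < n l \<and> j < n h}"
    by (rule finite_subset[of _ "\<Union>l\<in>{1..L}. \<Union>h<l. (\<lambda>(i, j). (BMid l h, i, j)) ` ({..<n l} \<times> {..<n h})"])
       force+
  show "finite {(BOut, r, j) |r j. r < dout \<and> j < n L}"
    by (rule finite_subset[of _ "(\<lambda>(r, j). (BOut, r, j)) ` ({..<dout} \<times> {..<n L})"]) force+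
qed

definition dense_edge_of :: "widx \<Rightarrow> edge" where
  "dense_edge_of a = (case a of
      (BIn, i, j) \<Rightarrow> (NIn j, N 0 0 i, 1 / sqrt (real (n 0)), Some a)
    | (BMid l h, i, j) \<Rightarrow> (N h 0 j, N l 0 i, sqrt (\<alpha> / (real (n (l - 1)) * real l)) * sqrt 2, Some a)
    | (BOut, r, j) \<Rightarrow> (N L 0 j, NOut r, 1 / sqrt (real (n L)), Some a))"

lemma finite_dense_edges: "finite (dense_edges d n L \<alpha> dout)"
proof (rule finite_surj[OF finite_dense_idx])
  show "dense_edges d n L \<alpha> dout \<subseteq> dense_edge_of ` dense_idx d n L dout"
  proof
    fix e assume "e \<in> dense_edges d n L \<alpha> dout"
    then show "e \<in> dense_edge_of ` dense_idx d n L dout"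
      by (intro image_eqI[where x = "the (snd (snd (snd e)))"])
         (auto simp: dense_edges_def dense_idx_def dense_edge_of_def)
  qed
qed

lemma dense_edges_rank: "\<forall>e\<in>dense_edges d n L \<alpha> dout. layer_rank L (fst e) < layer_rank L (tgt e)"
  by (auto simp: dense_edges_def layer_rank_def tgt_def)

lemma dense_in_edges_input: "{e \<in> dense_edges d n L \<alpha> dout. tgt e = NIn j} = {}"
  by (auto simp: dense_edges_def tgt_def)

lemma dense_in_edges_first:
  "i < n 0 \<Longrightarrow> {e \<in> dense_edges d n L \<alpha> dout. tgt e = N 0 0 i}
     = (\<lambda>j. (NIn j, N 0 0 i, 1 / sqrt (real (n 0)), Some (BIn, i, j))) ` {..<d}"
  by (auto simp: dense_edges_def tgt_def)

lemma dense_in_edges_hidden: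
  "1 \<le> l \<Longrightarrow> l \<le> L \<Longrightarrow> i < n l \<Longrightarrow> {e \<in> dense_edges d n L \<alpha> dout. tgt e = N l 0 i}
     = (\<lambda>(h, j). (N h 0 j, N l 0 i, sqrt (\<alpha> / (real (n (l - 1)) * real l)) * sqrt 2, Some (BMid l h, i, j)))
         ` (SIGMA h:{..<l}. {..<n h})"
  by (auto simp: dense_edges_def tgt_def)

lemma dense_in_edges_output:
  "r < dout \<Longrightarrow> {e \<in> dense_edges d n L \<alpha> dout. tgt e = NOut r}
     = (\<lambda>j. (N L 0 j, NOut r, 1 / sqrt (real (n L)), Some (BOut, r, j))) ` {..<n L}"
  by (auto simp: dense_edges_def tgt_def)

abbreviation dense_path_sum :: "(widx \<Rightarrow> real) \<Rightarrow> node \<Rightarrow> real" where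
  "dense_path_sum w \<equiv> path_sum (dense_edges d n L \<alpha> dout) (in_nodes d) (xin x) (dense_act d n L \<alpha> x w) w"

lemmas dense_path_sum_in_edges_image =
  path_sum_in_edges_image[OF finite_dense_edges dense_edges_rank, where ins = "in_nodes d" and xi = "xin x"]

lemma dense_path_sum_input: "dense_path_sum w (NIn j) = 0"
  by (subst path_sum_rec[OF finite_dense_edges dense_edges_rank]) (simp only: dense_in_edges_input sum.empty)

lemma dense_ys_eq_dense_y: "h \<le> l \<Longrightarrow> dense_ys d n \<alpha> x w l h = dense_y d n \<alpha> x w h"
proof (induction l)
  case (Suc l)
  then show ?case by (cases "h = Suc l") (auto simp: dense_y_def)
qed (simp add: dense_y_def)

lemma dense_y_Suc: "dense_y d n \<alpha> x w (Suc l) i = sqrt (\<alpha> / (real (n l) * real (Suc l))) *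
   (\<Sum>h<Suc l. \<Sum>j<n h. w (BMid (Suc l) h, i, j) * (sqrt 2 * relu (dense_y d n \<alpha> x w h j)))"
  by (simp add: dense_y_def[of _ _ _ _ _ "Suc l"] dense_ys_eq_dense_y)

lemma dense_path_sum_hidden:
  "l \<le> L \<Longrightarrow> i < n l \<Longrightarrow>
     dense_path_sum w (N l 0 i) = (if l < L then relu (dense_y d n \<alpha> x w l i) else dense_y d n \<alpha> x w l i)"
proof (induction l arbitrary: i rule: less_induct)
  case (less l)
  let ?z = "(if dense_act d n L \<alpha> x w (N l 0 i) then 1 else 0) :: real"
  have "dense_path_sum w (N l 0 i) = ?z * dense_y d n \<alpha> x w l i"
  proof (cases l)
    case 0
    with less.prems have "i < n 0" by simp
    then show ?thesis unfolding 0
      by (subst dense_path_sum_in_edges_image[OF dense_in_edges_first])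
         (auto intro: inj_onI simp: dense_path_sum_input edge_factor_def xin_def dense_y_def
           sum_distrib_left mult_ac)
  next
    case (Suc l')
    let ?c = "sqrt (\<alpha> / (real (n l') * real l)) * sqrt 2"
    have "dense_path_sum w (N l 0 i)
        = (\<Sum>(h, j)\<in>(SIGMA h:{..<l}. {..<n h}). ?c * w (BMid l h, i, j) * ?z * dense_path_sum w (N h 0 j))"
      using less.prems Suc
      by (subst dense_path_sum_in_edges_image[OF dense_in_edges_hidden])
         (auto intro!: inj_onI simp: edge_factor_def case_prod_unfold)
    also have "\<dots> = (\<Sum>h<l. \<Sum>j<n h. ?c * w (BMid l h, i, j) * ?z * relu (dense_y d n \<alpha> x w h j))"
      using less.IH less.prems by (subst sum.Sigma[symmetric]) (auto intro!: sum.cong)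
    also have "\<dots> = ?z * dense_y d n \<alpha> x w l i"
      using Suc by (simp add: dense_y_Suc sum_distrib_left mult_ac del: sum.lessThan_Suc)
    finally show ?thesis .
  qed
  moreover have "?z * dense_y d n \<alpha> x w l i
      = (if l < L then relu (dense_y d n \<alpha> x w l i) else dense_y d n \<alpha> x w l i)"
    by (simp add: dense_act_def relu_def)
  ultimately show ?case by simp
qed

lemma dense_f_eq_path_sum: "r < dout \<Longrightarrow> dense_f d n L \<alpha> x w r = dense_path_sum w (NOut r)"
  by (subst dense_path_sum_in_edges_image[OF dense_in_edges_output])
     (auto intro: inj_onI intro!: sum.cong simp: edge_factor_def dense_act_def dense_f_def
       dense_path_sum_hidden sum_distrib_left mult_ac)

lemma dense_ys_update_indep:
  "fst a \<notin> insert BIn {BMid l' h |l' h. l' \<le> l} \<Longrightarrow> dense_ys d n \<alpha> x (w(a := t)) l = dense_ys d n \<alpha> x w l"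
proof (induction l)
  case (Suc l)
  have "dense_ys d n \<alpha> x (w(a := t)) l = dense_ys d n \<alpha> x w l"
    using Suc.prems by (intro Suc.IH) auto
  moreover have "(w(a := t)) (BMid (Suc l) h, i, j) = w (BMid (Suc l) h, i, j)" for h i j
  proof -
    have "a \<noteq> (BMid (Suc l) h, i, j)" using Suc.prems by auto
    then show ?thesis by simp
  qed
  ultimately show ?case by (simp only: dense_ys.simps)
qed (auto intro!: ext sum.cong)

lemma dense_y_update_later_indep:
  "l < l' \<Longrightarrow> dense_y d n \<alpha> x (w((BMid l' h, i, j) := t)) l = dense_y d n \<alpha> x w l"
  unfolding dense_y_def by (subst dense_ys_update_indep) auto

lemma dense_ys_measurable[measurable]: "(\<lambda>w. dense_ys d n \<alpha> x w l h i) \<in> borel_measurable (lborel_on I)"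
proof (induction l arbitrary: h i)
  case (Suc l)
  have "(\<lambda>w. relu (dense_ys d n \<alpha> x w l h' j)) \<in> borel_measurable (lborel_on I)" for h' j
    using measurable_compose[OF Suc.IH relu_measurable] by (simp add: o_def)
  with Suc.IH show ?case by (cases "h = Suc l") simp_all
qed simp

lemma dense_y_measurable[measurable]: "(\<lambda>w. dense_y d n \<alpha> x w l i) \<in> borel_measurable (lborel_on I)"
  unfolding dense_y_def by measurable

lemma separately_continuous_dense_ys: "separately_continuous (\<lambda>w. dense_ys d n \<alpha> x w l h i)"
proof (induction l arbitrary: h i)
  case (Suc l)
  then show ?case
    by (cases "h = Suc l") (auto intro!: separately_continuous_intros simp del: sum.lessThan_Suc)
qed (auto intro!: separately_continuous_intros)

lemma separately_continuous_dense_y: "separately_continuous (\<lambda>w. dense_y d n \<alpha> x w l i)"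
  unfolding dense_y_def by (rule separately_continuous_dense_ys)

lemma AE_zero_stable_dense_y_first:
  "AE w in lborel_on (dense_idx d n L dout). \<forall>i<n 0. zero_stable (\<lambda>w. dense_y d n \<alpha> x w 0 i) w"
proof -
  have "AE w in lborel_on (dense_idx d n L dout). \<forall>i\<in>{..<n 0}. zero_stable (\<lambda>w. dense_y d n \<alpha> x w 0 i) w"
  proof (rule AE_finite_allI, simp)
    fix i assume i: "i \<in> {..<n 0}"
    have "AE w in lborel_on (dense_idx d n L dout). (\<forall>j\<in>{..<d}. zero_stable (\<lambda>_. x j) w) \<longrightarrow>
        zero_stable (\<lambda>w. 1 / sqrt (real (n 0)) * (\<Sum>j\<in>{..<d}. w (BIn, i, j) * x j)) w"
      by (rule AE_zero_stable_linear[OF finite_dense_idx]) (use i in \<open>auto intro: inj_onI simp: dense_idx_def\<close>)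
    then show "AE w in lborel_on (dense_idx d n L dout). zero_stable (\<lambda>w. dense_y d n \<alpha> x w 0 i) w"
      by (simp add: zero_stable_const dense_y_def)
  qed
  then show ?thesis by (rule eventually_mono) auto
qed

lemma AE_zero_stable_dense_y_step:
  assumes "Suc l \<le> L"
  shows "AE w in lborel_on (dense_idx d n L dout). (\<forall>h\<le>l. \<forall>j<n h. zero_stable (\<lambda>w. dense_y d n \<alpha> x w h j) w) \<longrightarrow>
           (\<forall>i<n (Suc l). zero_stable (\<lambda>w. dense_y d n \<alpha> x w (Suc l) i) w)"
proof -
  let ?J = "SIGMA h:{..<Suc l}. {..<n h}"
  let ?u = "\<lambda>p w. sqrt 2 * relu (dense_y d n \<alpha> x w (fst p) (snd p))"
  have "AE w in lborel_on (dense_idx d n L dout). \<forall>i\<in>{..<n (Suc l)}.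
      (\<forall>p\<in>?J. zero_stable (?u p) w) \<longrightarrow> zero_stable (\<lambda>w. dense_y d n \<alpha> x w (Suc l) i) w"
  proof (rule AE_finite_allI, simp)
    fix i assume i: "i \<in> {..<n (Suc l)}"
    let ?b = "\<lambda>p. (BMid (Suc l) (fst p), i, snd p)"
    have "AE w in lborel_on (dense_idx d n L dout). (\<forall>p\<in>?J. zero_stable (?u p) w) \<longrightarrow>
        zero_stable (\<lambda>w. sqrt (\<alpha> / (real (n l) * real (Suc l))) * (\<Sum>p\<in>?J. w (?b p) * ?u p w)) w"
    proof (rule AE_zero_stable_linear[OF finite_dense_idx])
      show "inj_on ?b ?J" by (auto intro!: inj_onI)
      show "?b ` ?J \<subseteq> dense_idx d n L dout" using i assms by (auto simp: dense_idx_def)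
      show "?u p \<in> borel_measurable (lborel_on (dense_idx d n L dout))" for p by measurable
      show "?u p (w(?b p' := t)) = ?u p w" if "p \<in> ?J" for p p' w t
        using that by (auto simp: dense_y_update_later_indep)
    qed simp
    moreover have "(\<Sum>p\<in>?J. w (?b p) * ?u p w)
        = (\<Sum>h<Suc l. \<Sum>j<n h. w (BMid (Suc l) h, i, j) * (sqrt 2 * relu (dense_y d n \<alpha> x w h j)))" for w
      using sum.Sigma[of "{..<Suc l}" "\<lambda>h. {..<n h}"
          "\<lambda>h j. w (BMid (Suc l) h, i, j) * (sqrt 2 * relu (dense_y d n \<alpha> x w h j))"]
      by (simp add: case_prod_unfold del: sum.lessThan_Suc)
    ultimately show "AE w in lborel_on (dense_idx d n L dout).
        (\<forall>p\<in>?J. zero_stable (?u p) w) \<longrightarrow> zero_stable (\<lambda>w. dense_y d n \<alpha> x w (Suc l) i) w"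
      by (simp only: dense_y_Suc)
  qed
  then show ?thesis
  proof eventually_elim
    case (elim w)
    show ?case
    proof (intro impI allI)
      assume "\<forall>h\<le>l. \<forall>j<n h. zero_stable (\<lambda>w. dense_y d n \<alpha> x w h j) w"
      then have "\<forall>p\<in>?J. zero_stable (?u p) w"
        by (auto intro: zero_stable_mult_relu[OF separately_continuous_dense_y])
      then show "zero_stable (\<lambda>w. dense_y d n \<alpha> x w (Suc l) i) w" if "i < n (Suc l)" for i
        using elim that by blast
    qed
  qed
qed

lemma AE_zero_stable_dense_y:
  "AE w in lborel_on (dense_idx d n L dout). \<forall>l\<le>L. \<forall>h\<le>l. \<forall>j<n h. zero_stable (\<lambda>w. dense_y d n \<alpha> x w h j) w"
proof (rule AE_nat_induct)
  show "AE w in lborel_on (dense_idx d n L dout). \<forall>h\<le>0. \<forall>j<n h. zero_stable (\<lambda>w. dense_y d n \<alpha> x w h j) w"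
    using AE_zero_stable_dense_y_first by simp
next
  fix l assume "l < L"
  then have "Suc l \<le> L" by simp
  from AE_zero_stable_dense_y_step[OF this]
  show "AE w in lborel_on (dense_idx d n L dout). (\<forall>h\<le>l. \<forall>j<n h. zero_stable (\<lambda>w. dense_y d n \<alpha> x w h j) w) \<longrightarrow>
      (\<forall>h\<le>Suc l. \<forall>j<n h. zero_stable (\<lambda>w. dense_y d n \<alpha> x w h j) w)"
    by (rule eventually_mono) (metis le_Suc_eq)
qed

lemma AE_dense_act_locally_constant:
  "AE w in lborel_on (dense_idx d n L dout). \<forall>a. \<forall>v\<in>tgt ` dense_edges d n L \<alpha> dout.
     \<forall>\<^sub>F t in nhds (w a). dense_act d n L \<alpha> x (w(a := t)) v = dense_act d n L \<alpha> x w v"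
  using AE_zero_stable_dense_y
proof eventually_elim
  case (elim w)
  show ?case
  proof (intro allI ballI)
    fix a v assume "v \<in> tgt ` dense_edges d n L \<alpha> dout"
    then consider l i where "v = N l 0 i" "l \<le> L" "i < n l" | r where "v = NOut r"
      by (auto simp: dense_edges_def tgt_def)
    then show "\<forall>\<^sub>F t in nhds (w a). dense_act d n L \<alpha> x (w(a := t)) v = dense_act d n L \<alpha> x w v"
    proof cases
      case 1
      have "\<forall>\<^sub>F t in nhds (w a). (0 < dense_y d n \<alpha> x (w(a := t)) l i) = (0 < dense_y d n \<alpha> x w l i)"
        using elim 1 by (intro zero_stable_eventually_pos_iff[OF separately_continuous_dense_y]) auto
      then show ?thesis unfolding 1(1) dense_act_def by (rule eventually_mono) simp
    qed (simp add: dense_act_def)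
  qed
qed

theorem dense_partials_agree_ae:
  assumes "r < dout"
  shows "partials_agree_ae (dense_idx d n L dout) (\<lambda>w. dense_f d n L \<alpha> x w r)
           (\<lambda>w. path_fk (dense_edges d n L \<alpha> dout) (in_nodes d) (NOut r) (xin x) (dense_act d n L \<alpha> x w) w k) k"
  using finite_dense_edges dense_edges_rank dense_f_eq_path_sum[OF assms] AE_dense_act_locally_constant
  by (rule partials_agree_ae_if_act_locally_constant)

end

theorem lemma2:
  shows "(\<forall>d (n :: nat \<Rightarrow> nat) L dout (x :: nat \<Rightarrow> real) r k.
            (\<exists>j<d. x j \<noteq> 0) \<and> (\<forall>l\<le>L. 0 < n l) \<and> r < dout \<longrightarrow>
            partials_agree_ae (van_idx d n L dout)
              (\<lambda>w. van_f d n L x w r)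
              (\<lambda>w. path_fk (van_edges d n L dout) (in_nodes d) (NOut r) (xin x) (van_act d n x w) w k)
              k)
       \<and> (\<forall>d (n :: nat) nh m L (\<alpha> :: nat \<Rightarrow> real) dout (x :: nat \<Rightarrow> real) r k.
            (\<exists>j<d. x j \<noteq> 0) \<and> 0 < n \<and> 1 \<le> m
            \<and> (\<forall>l h. 1 \<le> l \<and> l \<le> L \<and> 1 \<le> h \<and> h < m \<longrightarrow> 0 < nh l h)
            \<and> (\<forall>l. 1 \<le> l \<and> l \<le> L \<longrightarrow> 0 < \<alpha> l) \<and> r < dout \<longrightarrow>
            partials_agree_ae (res_idx d n nh m L dout)
              (\<lambda>w. res_f d n nh m L \<alpha> x w r)
              (\<lambda>w. path_fk (res_edges d n nh m L \<alpha> dout) (in_nodes d) (NOut r) (xin x)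
                     (res_act d n nh m \<alpha> x w) w k)
              k)
       \<and> (\<forall>d (n :: nat \<Rightarrow> nat) L (\<alpha> :: real) dout (x :: nat \<Rightarrow> real) r k.
            (\<exists>j<d. x j \<noteq> 0) \<and> (\<forall>l\<le>L. 0 < n l) \<and> 0 < \<alpha> \<and> r < dout \<longrightarrow>
            partials_agree_ae (dense_idx d n L dout)
              (\<lambda>w. dense_f d n L \<alpha> x w r)
              (\<lambda>w. path_fk (dense_edges d n L \<alpha> dout) (in_nodes d) (NOut r) (xin x)
                     (dense_act d n L \<alpha> x w) w k)
              k)"
  by (blast intro: van_partials_agree_ae res_partials_agree_ae dense_partials_agree_ae)

end
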